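(* Let $n\ge1$, $a,b\in\mathbb{C}$, and for $\beta=(\alpha_1,\dots,\alpha_n,\delta)\in\mathbb{C}^{n+1}$ put \[ \Phi(\beta;x)=\int_a^b t^{-\delta-1}\prod_{k=1}^n(x_{1k}+x_{2k}t)^{\alpha_k}\,dt,\qquad g(t,x)=t^{-\delta}\prod_{k=1}^n(x_{1k}+x_{2k}t)^{\alpha_k}, \] and assume $\mathrm{Re}(-\delta-1)>0$ and $\mathrm{Re}\,\alpha_k>0$ for all $k$. For each $1\le k\le n$, let $a_{1k}=e_k$ and $a_{2k}=e_k+e_{n+1}$ in $\mathbb{Z}^{n+1}$ (standard basis $e_1,\dots,e_{n+1}$). Then $\Phi$ satisfies the contiguity relations \begin{align*} S(\beta;-a_{1k})\,\Phi(\beta;x)&=\alpha_k\,\Phi(\beta-a_{1k};x),\\ S(\beta-a_{1k};+a_{1k})\,\Phi(\beta-a_{1k};x)&=\Big(\sum_{i=1}^n\alpha_i-\delta\Big)\Phi(\beta;x)-[g(t,x)]_{t=a}^{t=b},\\ S(\beta;-a_{2k})\,\Phi(\beta;x)&=\alpha_k\,\Phi(\beta-a_{2k};x),\\ S(\beta-a_{2k};+a_{2k})\,\Phi(\beta-a_{2k};x)&=\delta\,\Phi(\beta;x)+[g(t,x)]_{t=a}^{t=b}, \end{align*} where \begin{align*} S(\beta;-a_{1k})&=\partial_{1k},\qquad S(\beta;-a_{2k})=\partial_{2k},\\ S(\beta-a_{1k};+a_{1k})&=\sum_{i=1,\,i\ne k}^n(x_{1i}x_{2k}-x_{1k}x_{2i})\partial_{2i}+\sum_{i=1}^n\alpha_i\,x_{1k},\\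 S(\beta-a_{2k};+a_{2k})&=\sum_{i=1,\,i\ne k}^n x_{1k}x_{2i}\partial_{1i}+\Big(\sum_{i=1,\,i\ne k}^n\theta_{2i}+\alpha_k\Big)x_{2k}. \end{align*}
   Context: Variables $x=(x_{ij})_{i=1,2;\,1\le j\le n}$, $\partial_{ij}=\partial/\partial x_{ij}$, $\theta_{ij}=x_{ij}\partial_{ij}$; products of operators are compositions. $[g(t,x)]_{t=a}^{t=b}=g(b,x)-g(a,x)$, with $g$ built from the parameter $\beta=(\alpha_1,\dots,\alpha_n,\delta)$; branches of the powers are fixed along the path of integration. For a parameter vector $\beta'=(\alpha'_1,\dots,\alpha'_n,\delta')$, $\Phi(\beta';x)$ denotes the same integral with $\alpha_k,\delta$ replaced by $\alpha'_k,\delta'$. The $\alpha_i$ in the operators are the components of $\beta$. *)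

theory Defs
  imports "HOL-Complex_Analysis.Complex_Analysis"
begin

text \<open>Points x = (x_{1j}, x_{2j})_j are represented as pairs (fst x, snd x) of
  vectors in complex^'n; the number n of columns is CARD('n).\<close>

text \<open>Power with a fixed branch: w is the base, l a chosen logarithm of w
  (exp l = w whenever w is nonzero), c the exponent.  At w = 0 the value is the
  limit 0 (the exponents used at such points have positive real part).\<close>
definition pw :: "complex \<Rightarrow> complex \<Rightarrow> complex \<Rightarrow> complex" where
  "pw w l c = (if w = 0 then 0 else exp (c * l))"

definition lin :: "(complex^'n) \<times> (complex^'n) \<Rightarrow> 'n \<Rightarrow> complex \<Rightarrow> complex" where
  "lin x k t = fst x $ k + snd x $ k * t"

definition integrand ::
  "(real \<Rightarrow> complex) \<Rightarrow> (real \<Rightarrow> complex) \<Rightarrow> ('n \<Rightarrow> (complex^'n) \<times> (complex^'n) \<Rightarrow> real \<Rightarrow> complex)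
   \<Rightarrow> complex^'n \<Rightarrow> complex \<Rightarrow> (complex^'n) \<times> (complex^'n) \<Rightarrow> real \<Rightarrow> complex" where
  "integrand \<gamma> lt lL \<alpha> \<delta> x s =
     pw (\<gamma> s) (lt s) (- \<delta> - 1) * (\<Prod>k\<in>UNIV. pw (lin x k (\<gamma> s)) (lL k x s) (\<alpha> $ k))"

text \<open>Phi(beta; x) = integral along gamma (the contour integral written out,
  exactly as in the definition of has_contour_integral).\<close>
definition Phi ::
  "(real \<Rightarrow> complex) \<Rightarrow> (real \<Rightarrow> complex) \<Rightarrow> ('n \<Rightarrow> (complex^'n) \<times> (complex^'n) \<Rightarrow> real \<Rightarrow> complex)
   \<Rightarrow> complex^'n \<Rightarrow> complex \<Rightarrow> (complex^'n) \<times> (complex^'n) \<Rightarrow> complex" where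
  "Phi \<gamma> lt lL \<alpha> \<delta> x =
     integral {0..1} (\<lambda>s. integrand \<gamma> lt lL \<alpha> \<delta> x s * vector_derivative \<gamma> (at s within {0..1}))"

definition gfun ::
  "(real \<Rightarrow> complex) \<Rightarrow> (real \<Rightarrow> complex) \<Rightarrow> ('n \<Rightarrow> (complex^'n) \<times> (complex^'n) \<Rightarrow> real \<Rightarrow> complex)
   \<Rightarrow> complex^'n \<Rightarrow> complex \<Rightarrow> (complex^'n) \<times> (complex^'n) \<Rightarrow> real \<Rightarrow> complex" where
  "gfun \<gamma> lt lL \<alpha> \<delta> x s =
     pw (\<gamma> s) (lt s) (- \<delta>) * (\<Prod>k\<in>UNIV. pw (lin x k (\<gamma> s)) (lL k x s) (\<alpha> $ k))"

definition upd1 :: "(complex^'n) \<times> (complex^'n) \<Rightarrow> 'n \<Rightarrow> complex \<Rightarrow> (complex^'n) \<times> (complex^'n)" where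
  "upd1 x i z = ((\<chi> j. if j = i then z else fst x $ j), snd x)"

definition upd2 :: "(complex^'n) \<times> (complex^'n) \<Rightarrow> 'n \<Rightarrow> complex \<Rightarrow> (complex^'n) \<times> (complex^'n)" where
  "upd2 x i z = (fst x, (\<chi> j. if j = i then z else snd x $ j))"

definition pd1 :: "((complex^'n) \<times> (complex^'n) \<Rightarrow> complex) \<Rightarrow> 'n \<Rightarrow> (complex^'n) \<times> (complex^'n) \<Rightarrow> complex" where
  "pd1 F i x = deriv (\<lambda>z. F (upd1 x i z)) (fst x $ i)"

definition pd2 :: "((complex^'n) \<times> (complex^'n) \<Rightarrow> complex) \<Rightarrow> 'n \<Rightarrow> (complex^'n) \<times> (complex^'n) \<Rightarrow> complex" where
  "pd2 F i x = deriv (\<lambda>z. F (upd2 x i z)) (snd x $ i)"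

end

theory Submission
  imports Defs
begin

text \<open>Differentiating under the integral sign, \<partial>_{1k} and \<partial>_{2k} turn the integrand into \<alpha>_k times
  the integrand with \<alpha>_k lowered by one (times t for \<partial>_{2k}); this gives the first and third
  relations. The second and fourth are integrated forms of pointwise identities that follow from
  d/dt g = g * (-\<delta>/t + \<Sigma>_j \<alpha>_j x_{2j} / (x_{1j} + x_{2j} t)); the boundary term is the fundamental
  theorem of calculus for g.

  The analytic work is the differentiation under the integral sign: the path is only piecewise C1
  and t powr (-\<delta>-1) may have a branch point at an end of the path. Near each parameter value the
  integrand is t powr \<mu> * H(z, t) with H holomorphic, and its integral over a short piece of the path
  is a difference of values of an explicit primitive that can be differentiated in z: a primitive
  along line segments away from 0, and t powr (\<mu>+1) * \<integral>_0^1 \<rho> powr \<mu> * H(z, \<rho> t) d\<rho> near 0.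
  Compactness of [0, 1] glues the pieces.\<close>

section \<open>Differentiating parameter integrals piece by piece\<close>

lemma interval_property_local_to_global:
  fixes P :: "real \<Rightarrow> real \<Rightarrow> bool"
  assumes "a \<le> b"
    and refl: "\<And>p. P p p"
    and trans: "\<And>p q r. p \<le> q \<Longrightarrow> q \<le> r \<Longrightarrow> P p q \<Longrightarrow> P q r \<Longrightarrow> P p r"
    and local: "\<And>s. s \<in> {a..b} \<Longrightarrow> \<exists>\<epsilon>>0. \<forall>p q. p \<in> {a..b} \<longrightarrow> q \<in> {a..b} \<longrightarrow> p \<le> q
                  \<longrightarrow> \<bar>p - s\<bar> < \<epsilon> \<longrightarrow> \<bar>q - s\<bar> < \<epsilon> \<longrightarrow> P p q"
  shows "P a b"
proof -
  have "\<forall>s\<in>{a..b}. \<exists>\<epsilon>>0. \<forall>p q. p \<in> {a..b} \<longrightarrow> q \<in> {a..b} \<longrightarrow> p \<le> q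
      \<longrightarrow> \<bar>p - s\<bar> < \<epsilon> \<longrightarrow> \<bar>q - s\<bar> < \<epsilon> \<longrightarrow> P p q"
    using local by blast
  then obtain \<epsilon> where \<epsilon>: "\<And>s. s \<in> {a..b} \<Longrightarrow> \<epsilon> s > 0 \<and> (\<forall>p q. p \<in> {a..b} \<longrightarrow> q \<in> {a..b}
      \<longrightarrow> p \<le> q \<longrightarrow> \<bar>p - s\<bar> < \<epsilon> s \<longrightarrow> \<bar>q - s\<bar> < \<epsilon> s \<longrightarrow> P p q)"
    by (subst (asm) bchoice_iff) blast
  have "s \<in> ball s (\<epsilon> s)" if "s \<in> {a..b}" for s
    using \<epsilon>[OF that] by simp
  then have cover: "{a..b} \<subseteq> \<Union> ((\<lambda>s. ball s (\<epsilon> s)) ` {a..b})"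
    by blast
  obtain e where e: "0 < e"
      "\<And>x. x \<in> {a..b} \<Longrightarrow> \<exists>G \<in> (\<lambda>s. ball s (\<epsilon> s)) ` {a..b}. ball x e \<subseteq> G"
    using Heine_Borel_lemma[OF compact_Icc cover] by blast
  have short: "P p q" if pq: "p \<in> {a..b}" "q \<in> {a..b}" "p \<le> q" "q - p < e" for p q
  proof -
    obtain s where s: "s \<in> {a..b}" "ball p e \<subseteq> ball s (\<epsilon> s)"
      using e(2)[OF pq(1)] by blast
    have "p \<in> ball p e" "q \<in> ball p e"
      using e(1) pq(3,4) by (auto simp: dist_real_def)
    then have "\<bar>p - s\<bar> < \<epsilon> s" "\<bar>q - s\<bar> < \<epsilon> s"
      using s(2) by (auto simp: dist_real_def abs_minus_commute subset_iff)
    then show ?thesis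
      using \<epsilon>[OF s(1)] pq(1-3) by blast
  qed
  define c where "c n = min b (a + real n * (e/2))" for n
  have reach: "P a (c n)" for n
  proof (induction n)
    case 0
    then show ?case using refl \<open>a \<le> b\<close> by (simp add: c_def)
  next
    case (Suc n)
    have "a \<le> c n" "c n \<le> c (Suc n)" "c (Suc n) - c n < e" "c n \<in> {a..b}" "c (Suc n) \<in> {a..b}"
      using e(1) \<open>a \<le> b\<close> by (auto simp: c_def min_def field_simps)
    then show ?case
      using trans[OF _ _ Suc short] by blast
  qed
  obtain n where "b - a \<le> real n * (e/2)"
    using real_arch_simple[of "2 * (b - a) / e"] e(1) by (auto simp: field_simps)
  then have "c n = b"
    by (simp add: c_def)
  with reach[of n] show ?thesis by simp
qed

definition param_integral_deriv ::
  "(complex \<Rightarrow> real \<Rightarrow> complex) \<Rightarrow> (real \<Rightarrow> complex) \<Rightarrow> complex \<Rightarrow> real \<Rightarrow> real \<Rightarrow> bool" where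
  "param_integral_deriv \<phi> \<phi>' z0 p q \<longleftrightarrow>
     (\<forall>\<^sub>F z in nhds z0. \<phi> z integrable_on {p..q}) \<and> \<phi>' integrable_on {p..q} \<and>
     ((\<lambda>z. integral {p..q} (\<phi> z)) has_field_derivative integral {p..q} \<phi>') (at z0)"

lemma param_integral_deriv_refl: "param_integral_deriv \<phi> \<phi>' z0 p p"
proof -
  have "f integrable_on {p..p}" for f :: "real \<Rightarrow> complex"
    by (rule has_integral_integrable[OF has_integral_null_real]) simp
  then show ?thesis
    by (simp add: param_integral_deriv_def)
qed

lemma param_integral_deriv_combine:
  assumes "p \<le> q" "q \<le> r" "param_integral_deriv \<phi> \<phi>' z0 p q" "param_integral_deriv \<phi> \<phi>' z0 q r"
  shows "param_integral_deriv \<phi> \<phi>' z0 p r"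
proof -
  from assms(3,4) have ev1: "\<forall>\<^sub>F z in nhds z0. \<phi> z integrable_on {p..q}"
    and ev2: "\<forall>\<^sub>F z in nhds z0. \<phi> z integrable_on {q..r}"
    and i: "\<phi>' integrable_on {p..q}" "\<phi>' integrable_on {q..r}"
    and d1: "((\<lambda>z. integral {p..q} (\<phi> z)) has_field_derivative integral {p..q} \<phi>') (at z0)"
    and d2: "((\<lambda>z. integral {q..r} (\<phi> z)) has_field_derivative integral {q..r} \<phi>') (at z0)"
    unfolding param_integral_deriv_def by auto
  have ev: "\<forall>\<^sub>F z in nhds z0. \<phi> z integrable_on {p..q} \<and> \<phi> z integrable_on {q..r}"
    using ev1 ev2 by (rule eventually_conj)
  have d: "((\<lambda>z. integral {p..q} (\<phi> z) + integral {q..r} (\<phi> z)) has_field_derivative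
              integral {p..q} \<phi>' + integral {q..r} \<phi>') (at z0)"
    using d1 d2 by (rule DERIV_add)
  have ev': "\<forall>\<^sub>F z in nhds z0. \<phi> z integrable_on {p..r} \<and>
      integral {p..r} (\<phi> z) = integral {p..q} (\<phi> z) + integral {q..r} (\<phi> z)"
    using ev
  proof eventually_elim
    case (elim z)
    then have "\<phi> z integrable_on {p..r}"
      using Henstock_Kurzweil_Integration.integrable_combine[OF assms(1,2)] by blast
    then show ?case
      using Henstock_Kurzweil_Integration.integral_combine[OF assms(1,2)] by metis
  qed
  then have "\<forall>\<^sub>F z in nhds z0.
      integral {p..r} (\<phi> z) = integral {p..q} (\<phi> z) + integral {q..r} (\<phi> z)"
    by (rule eventually_mono) simp
  from iffD2[OF DERIV_cong_ev[OF refl this refl] d]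
  have "((\<lambda>z. integral {p..r} (\<phi> z)) has_field_derivative
              integral {p..q} \<phi>' + integral {q..r} \<phi>') (at z0)" .
  moreover have "\<phi>' integrable_on {p..r}"
    using i assms(1,2) Henstock_Kurzweil_Integration.integrable_combine by blast
  moreover note Henstock_Kurzweil_Integration.integral_combine[OF assms(1,2) this]
  ultimately show ?thesis
    unfolding param_integral_deriv_def using ev' by (auto elim: eventually_mono)
qed

lemma param_integral_derivI:
  assumes "r > 0"
    and "\<And>z. z \<in> ball z0 r \<Longrightarrow> (\<phi> z has_integral V z) {p..q}"
    and "(\<phi>' has_integral V') {p..q}"
    and "(V has_field_derivative V') (at z0)"
  shows "param_integral_deriv \<phi> \<phi>' z0 p q"
proof -
  have ev: "\<forall>\<^sub>F z in nhds z0. z \<in> ball z0 r"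
    using assms(1) by (intro eventually_nhds_in_open) auto
  have "\<forall>\<^sub>F z in nhds z0. integral {p..q} (\<phi> z) = V z"
    using ev by (rule eventually_mono) (use assms(2) integral_unique in blast)
  from iffD2[OF DERIV_cong_ev[OF refl this refl] assms(4)]
  have "((\<lambda>z. integral {p..q} (\<phi> z)) has_field_derivative V') (at z0)" .
  moreover have "\<forall>\<^sub>F z in nhds z0. \<phi> z integrable_on {p..q}"
    using ev by (rule eventually_mono) (use assms(2) in blast)
  ultimately show ?thesis
    unfolding param_integral_deriv_def using assms(3) integral_unique by blast
qed

section \<open>Primitives along paths and branches of the logarithm\<close>

abbreviation path_deriv :: "(real \<Rightarrow> complex) \<Rightarrow> real \<Rightarrow> complex" where
  "path_deriv \<gamma> s \<equiv> vector_derivative \<gamma> (at s within {0..1})"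

lemma valid_path_has_path_deriv:
  assumes "valid_path \<gamma>"
  obtains S where "finite S" "\<And>s. s \<in> {0<..<1} - S \<Longrightarrow> (\<gamma> has_vector_derivative path_deriv \<gamma> s) (at s)"
proof -
  from assms obtain S D where S: "finite S" and D: "\<forall>s\<in>{0..1} - S. (\<gamma> has_vector_derivative D s) (at s)"
    unfolding valid_path_def piecewise_C1_differentiable_on_def C1_differentiable_on_def by blast
  have "(\<gamma> has_vector_derivative path_deriv \<gamma> s) (at s)" if s: "s \<in> {0<..<1} - S" for s
  proof -
    have d: "(\<gamma> has_vector_derivative D s) (at s)"
      using D s by auto
    have "at s within {0..1} = at s"
      using s by (intro at_within_interior) auto
    then show ?thesis
      using d vector_derivative_at[OF d] by simp
  qed
  with S that show ?thesis by blast
qed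

lemma valid_path_continuous_on: "valid_path \<gamma> \<Longrightarrow> continuous_on {0..1} \<gamma>"
  using valid_path_imp_path path_def by blast

lemma contour_integral_linepath_primitive:
  assumes "\<And>w. w \<in> S \<Longrightarrow> (g has_field_derivative f w) (at w within S)" "closed_segment u v \<subseteq> S"
  shows "contour_integral (linepath u v) f = g v - g u"
  using contour_integral_primitive[OF assms(1) valid_path_linepath] assms(2)
  by (intro contour_integral_unique) auto

lemma has_integral_holomorphic_along_path:
  fixes f :: "complex \<Rightarrow> complex"
  assumes hol: "f holomorphic_on S" and S: "open S" "convex S" and vp: "valid_path \<gamma>"
    and pq: "0 \<le> p" "p \<le> q" "q \<le> 1" and img: "\<gamma> ` {p..q} \<subseteq> S"
  shows "((\<lambda>s. f (\<gamma> s) * path_deriv \<gamma> s) has_integral contour_integral (linepath (\<gamma> p) (\<gamma> q)) f) {p..q}"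
proof -
  obtain g where g: "\<And>w. w \<in> S \<Longrightarrow> (g has_field_derivative f w) (at w within S)"
    using holomorphic_convex_primitive'[OF S(2,1) hol] by blast
  have g': "(g has_field_derivative f w) (at w)" if "w \<in> S" for w
    using g[OF that] at_within_open[OF that S(1)] by simp
  obtain T where T: "finite T" "\<And>s. s \<in> {0<..<1} - T \<Longrightarrow> (\<gamma> has_vector_derivative path_deriv \<gamma> s) (at s)"
    using valid_path_has_path_deriv[OF vp] by blast
  have ends: "\<gamma> p \<in> S" "\<gamma> q \<in> S"
    using img pq by auto
  have "((\<lambda>s. path_deriv \<gamma> s * f (\<gamma> s)) has_integral (g \<circ> \<gamma>) q - (g \<circ> \<gamma>) p) {p..q}"
  proof (rule fundamental_theorem_of_calculus_interior_strong[OF T(1) pq(2)])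
    fix s assume s: "s \<in> {p<..<q} - T"
    then have "\<gamma> s \<in> S"
      using img by auto
    moreover have "s \<in> {0<..<1} - T"
      using s pq by auto
    ultimately show "((g \<circ> \<gamma>) has_vector_derivative path_deriv \<gamma> s * f (\<gamma> s)) (at s)"
      using field_vector_diff_chain_at[OF T(2) g'] by blast
  next
    have "continuous_on S g"
      using g' by (meson DERIV_isCont continuous_at_imp_continuous_on)
    moreover have "continuous_on {p..q} \<gamma>"
      using valid_path_continuous_on[OF vp] by (rule continuous_on_subset) (use pq in auto)
    ultimately show "continuous_on {p..q} (g \<circ> \<gamma>)"
      using continuous_on_compose continuous_on_subset img by blast
  qed
  moreover have "(g \<circ> \<gamma>) q - (g \<circ> \<gamma>) p = contour_integral (linepath (\<gamma> p) (\<gamma> q)) f"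
    using contour_integral_linepath_primitive[OF g closed_segment_subset[OF ends S(2)]] by simp
  ultimately show ?thesis
    by (simp add: mult.commute)
qed

lemma contour_integral_linepath_param_deriv:
  fixes F F' :: "complex \<Rightarrow> complex \<Rightarrow> complex"
  assumes Z: "open Z" "convex Z" "z0 \<in> Z" and seg: "closed_segment u v \<subseteq> S"
    and F: "\<And>z w. z \<in> Z \<Longrightarrow> w \<in> S \<Longrightarrow> ((\<lambda>z. F z w) has_field_derivative F' z w) (at z)"
    and F'_cont: "continuous_on (Z \<times> S) (\<lambda>(z, w). F' z w)"
    and F_cont: "\<And>z. z \<in> Z \<Longrightarrow> continuous_on S (F z)"
  shows "((\<lambda>z. contour_integral (linepath u v) (F z)) has_field_derivative
           contour_integral (linepath u v) (F' z0)) (at z0)"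
proof -
  have lp: "linepath u v \<tau> \<in> S" if "\<tau> \<in> {0..1}" for \<tau>
    using seg that linepath_in_path by blast
  have "((\<lambda>z. integral (cbox 0 1) (\<lambda>\<tau>. F z (linepath u v \<tau>) * (v - u))) has_field_derivative
          integral (cbox 0 1) (\<lambda>\<tau>. F' z0 (linepath u v \<tau>) * (v - u))) (at z0 within Z)"
  proof (rule leibniz_rule_field_derivative[OF _ _ _ Z(3,2)])
    fix z and \<tau> :: real assume "z \<in> Z" "\<tau> \<in> cbox 0 1"
    then have "((\<lambda>z. F z (linepath u v \<tau>)) has_field_derivative F' z (linepath u v \<tau>)) (at z)"
      using lp F by simp
    then show "((\<lambda>z. F z (linepath u v \<tau>) * (v - u)) has_field_derivative
                 F' z (linepath u v \<tau>) * (v - u)) (at z within Z)"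
      by (rule has_field_derivative_at_within[OF DERIV_cmult_right])
  next
    fix z assume "z \<in> Z"
    then have "continuous_on {0..1} (\<lambda>\<tau>. F z (linepath u v \<tau>) * (v - u))"
      using lp by (intro continuous_intros continuous_on_compose2[OF F_cont]) auto
    then show "(\<lambda>\<tau>. F z (linepath u v \<tau>) * (v - u)) integrable_on cbox 0 1"
      by (simp add: integrable_continuous_real)
  next
    have "continuous_on (Z \<times> cbox 0 1) (\<lambda>(z, \<tau>). (z, linepath u v \<tau>))"
      by (auto simp: split_beta linepath_def intro!: continuous_intros)
    moreover have "(\<lambda>(z, \<tau>). (z, linepath u v \<tau>)) ` (Z \<times> cbox 0 1) \<subseteq> Z \<times> S"
      using lp by auto
    ultimately have "continuous_on (Z \<times> cbox 0 1) (\<lambda>(z, \<tau>). F' z (linepath u v \<tau>))"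
      using continuous_on_compose2[OF F'_cont, of "Z \<times> cbox 0 1" "\<lambda>(z, \<tau>). (z, linepath u v \<tau>)"]
      by (simp add: split_beta)
    then show "continuous_on (Z \<times> cbox 0 1) (\<lambda>(z, \<tau>). F' z (linepath u v \<tau>) * (v - u))"
      by (auto simp: split_beta intro!: continuous_intros)
  qed
  then show ?thesis
    using at_within_open[OF Z(3,1)] by (simp add: contour_integral_integral)
qed

lemma eventually_log_branch_eq_Ln:
  fixes l w :: "'a \<Rightarrow> complex"
  assumes l: "(l \<longlongrightarrow> l0) F" and w: "(w \<longlongrightarrow> w0) F" and "w0 \<noteq> 0"
    and exp_l: "\<forall>\<^sub>F x in F. exp (l x) = w x" and "exp l0 = w0"
  shows "\<forall>\<^sub>F x in F. l x = l0 + Ln (w x / w0)"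
proof -
  have "((\<lambda>x. w x / w0) \<longlongrightarrow> 1) F"
    using tendsto_divide[OF w tendsto_const, of w0] \<open>w0 \<noteq> 0\<close> by simp
  moreover have "isCont Ln 1"
    by (rule continuous_at_Ln) (auto simp: nonpos_Reals_def)
  ultimately have "((\<lambda>x. Ln (w x / w0)) \<longlongrightarrow> Ln 1) F"
    using isCont_tendsto_compose by blast
  then have "((\<lambda>x. l x - l0 - Ln (w x / w0)) \<longlongrightarrow> 0) F"
    using tendsto_diff[OF tendsto_diff[OF l tendsto_const[of l0]]] by fastforce
  then have small: "\<forall>\<^sub>F x in F. norm (l x - l0 - Ln (w x / w0)) < 1"
    using tendsto_norm_zero order_tendstoD(2) zero_less_one by blast
  have "\<forall>\<^sub>F x in F. w x \<noteq> 0"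
    using tendsto_imp_eventually_ne[OF w \<open>w0 \<noteq> 0\<close>] .
  with small exp_l show ?thesis
  proof eventually_elim
    case (elim x)
    define d where "d = l x - l0 - Ln (w x / w0)"
    \<comment> \<open>d is a logarithm of 1 of modulus less than 1, hence 0.\<close>
    have "exp d = 1"
      using elim \<open>exp l0 = w0\<close> \<open>w0 \<noteq> 0\<close> by (simp add: d_def exp_diff exp_Ln)
    then obtain n :: int where n: "Re d = 0" "Im d = real_of_int (2 * n) * pi"
      unfolding exp_eq_1 by blast
    have "2 * \<bar>real_of_int n\<bar> * pi < 1"
      using elim abs_Im_le_cmod[of d] n(2) by (simp add: d_def abs_mult)
    have "n = 0"
    proof (rule ccontr)
      assume "n \<noteq> 0"
      then have "pi \<le> \<bar>real_of_int n\<bar> * pi"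
        by simp
      with \<open>2 * \<bar>real_of_int n\<bar> * pi < 1\<close> pi_gt3 show False
        by linarith
    qed
    then show ?case
      using n by (simp add: d_def complex_eq_iff)
  qed
qed

lemma divide_notin_nonpos_Reals:
  fixes t c :: complex
  assumes "norm (t - c) < norm c"
  shows "t / c \<notin> \<real>\<^sub>\<le>\<^sub>0"
proof
  assume "t / c \<in> \<real>\<^sub>\<le>\<^sub>0"
  then have "1 \<le> norm (t / c - 1)"
    by (auto simp: nonpos_Reals_def complex_eq_iff intro: order.trans[OF _ abs_Re_le_cmod])
  moreover have "c \<noteq> 0"
    using assms by auto
  then have "t / c - 1 = (t - c) / c"
    by (simp add: field_simps)
  then have "norm (t / c - 1) = norm (t - c) / norm c"
    by (simp add: norm_divide)
  moreover have "norm (t - c) / norm c < 1"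
    using assms \<open>c \<noteq> 0\<close> by (simp add: divide_less_eq)
  ultimately show False
    by simp
qed

lemma continuous_log_branch_eq_Ln:
  fixes l w :: "'a::metric_space \<Rightarrow> complex"
  assumes "continuous_on A l" "continuous_on A w" "\<And>x. x \<in> A \<Longrightarrow> exp (l x) = w x" "x0 \<in> A"
  shows "\<exists>d>0. \<forall>x\<in>A. dist x x0 < d \<longrightarrow> l x = l x0 + Ln (w x / w x0)"
proof -
  have "w x0 \<noteq> 0"
    using assms(3)[OF assms(4)] exp_not_eq_zero by metis
  have "(l \<longlongrightarrow> l x0) (at x0 within A)" "(w \<longlongrightarrow> w x0) (at x0 within A)"
    using assms(1,2,4) by (auto simp: continuous_on_def)
  moreover have "\<forall>\<^sub>F x in at x0 within A. exp (l x) = w x"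
    using assms(3) by (auto simp: eventually_at_filter)
  ultimately have "\<forall>\<^sub>F x in at x0 within A. l x = l x0 + Ln (w x / w x0)"
    using eventually_log_branch_eq_Ln \<open>w x0 \<noteq> 0\<close> assms(3,4) by blast
  then obtain d where "d > 0" "\<And>x. x \<in> A \<Longrightarrow> x \<noteq> x0 \<Longrightarrow> dist x x0 < d \<Longrightarrow> l x = l x0 + Ln (w x / w x0)"
    unfolding eventually_at by blast
  with \<open>w x0 \<noteq> 0\<close> show ?thesis
    by (metis Ln_1 add.right_neutral divide_self)
qed

lemma path_log_branch_eq_Ln:
  fixes \<gamma> lt :: "real \<Rightarrow> complex"
  assumes "continuous_on {0..1} \<gamma>"
    and lt_cont: "continuous_on {s\<in>{0..1}. \<gamma> s \<noteq> 0} lt"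
    and lt_log: "\<forall>s\<in>{0..1}. \<gamma> s \<noteq> 0 \<longrightarrow> exp (lt s) = \<gamma> s"
    and "s0 \<in> {0..1}" "\<gamma> s0 \<noteq> 0"
  shows "\<exists>d>0. \<forall>s\<in>{0..1}. \<bar>s - s0\<bar> < d \<longrightarrow> \<gamma> s \<noteq> 0 \<and> lt s = lt s0 + Ln (\<gamma> s / \<gamma> s0)"
proof -
  obtain d1 where d1: "d1 > 0" "\<And>s. s \<in> {s\<in>{0..1}. \<gamma> s \<noteq> 0} \<Longrightarrow> dist s s0 < d1 \<Longrightarrow>
      lt s = lt s0 + Ln (\<gamma> s / \<gamma> s0)"
  proof -
    have "continuous_on {s\<in>{0..1}. \<gamma> s \<noteq> 0} \<gamma>"
      using assms(1) by (rule continuous_on_subset) auto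
    from continuous_log_branch_eq_Ln[OF lt_cont this, of s0] assms(4,5) lt_log
    show ?thesis using that by auto
  qed
  obtain d2 where d2: "d2 > 0" "\<And>s. s \<in> {0..1} \<Longrightarrow> dist s s0 < d2 \<Longrightarrow> dist (\<gamma> s) (\<gamma> s0) < norm (\<gamma> s0)"
    using assms(1,4,5) unfolding continuous_on_iff by (metis zero_less_norm_iff)
  have "\<gamma> s \<noteq> 0 \<and> lt s = lt s0 + Ln (\<gamma> s / \<gamma> s0)" if "s \<in> {0..1}" "\<bar>s - s0\<bar> < min d1 d2" for s
  proof -
    have "\<gamma> s \<noteq> 0"
      using d2(2)[of s] that by (auto simp: dist_real_def)
    then show ?thesis
      using d1(2)[of s] that by (simp add: dist_real_def)
  qed
  with d1(1) d2(1) show ?thesis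
    by (intro exI[of _ "min d1 d2"]) auto
qed

lemma has_vector_derivative_log_branch:
  fixes f l :: "real \<Rightarrow> complex"
  assumes f: "(f has_vector_derivative D) (at s)" and "f s \<noteq> 0" and "d > 0"
    and l: "\<And>\<sigma>. \<bar>\<sigma> - s\<bar> < d \<Longrightarrow> l \<sigma> = l s + Ln (f \<sigma> / f s)"
  shows "(l has_vector_derivative D / f s) (at s)"
proof -
  have "((\<lambda>z. z / f s) has_field_derivative 1 / f s) (at (f s))"
    using DERIV_cdivide[OF DERIV_ident, of "f s" "f s"] by simp
  moreover have "(Ln has_field_derivative inverse (f s / f s)) (at (f s / f s))"
    using \<open>f s \<noteq> 0\<close> by (intro has_field_derivative_Ln) (simp add: nonpos_Reals_def)
  ultimately have "((\<lambda>z. Ln (z / f s)) has_field_derivative inverse (f s / f s) * (1 / f s)) (at (f s))"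
    by (rule DERIV_chain2[rotated])
  from DERIV_add[OF DERIV_const[of "l s"] this]
  have "((\<lambda>z. l s + Ln (z / f s)) has_field_derivative inverse (f s / f s) * (1 / f s)) (at (f s))"
    by simp
  from field_vector_diff_chain_at[OF f this]
  have "((\<lambda>\<sigma>. l s + Ln (f \<sigma> / f s)) has_vector_derivative D / f s) (at s)"
    using \<open>f s \<noteq> 0\<close> by (simp add: o_def field_simps)
  then show ?thesis
  proof (rule has_vector_derivative_transform_within_open[of _ _ _ "ball s d"])
    show "open (ball s d)" "s \<in> ball s d"
      using \<open>d > 0\<close> by auto
    fix \<sigma> assume "\<sigma> \<in> ball s d"
    then show "l s + Ln (f \<sigma> / f s) = l \<sigma>"
      using l[of \<sigma>] by (simp add: dist_real_def abs_minus_commute)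
  qed
qed

lemma norm_pw_le:
  assumes "w \<noteq> 0 \<Longrightarrow> exp l = w" and "\<bar>Im l\<bar> \<le> B"
  shows "norm (pw w l c) \<le> norm w powr Re c * exp (\<bar>Im c\<bar> * B)"
proof (cases "w = 0")
  case True
  then show ?thesis by (simp add: pw_def)
next
  case False
  then have "Re l = ln (norm w)"
    using assms(1) by (metis ln_exp norm_exp_eq_Re)
  moreover have "- (Im c * Im l) \<le> \<bar>Im c\<bar> * B"
    using abs_ge_minus_self[of "Im c * Im l"] mult_left_mono[OF assms(2), of "\<bar>Im c\<bar>"]
    by (simp add: abs_mult)
  ultimately have "norm (pw w l c) \<le> exp (Re c * ln (norm w) + \<bar>Im c\<bar> * B)"
    using False by (simp add: pw_def norm_exp_eq_Re)
  also have "\<dots> = norm w powr Re c * exp (\<bar>Im c\<bar> * B)"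
    using False by (simp add: powr_def exp_add mult.commute)
  finally show ?thesis .
qed

lemma continuous_on_pw_path:
  fixes \<gamma> lt :: "real \<Rightarrow> complex"
  assumes \<gamma>: "continuous_on {0..1} \<gamma>"
    and lt_cont: "continuous_on {s\<in>{0..1}. \<gamma> s \<noteq> 0} lt"
    and lt_log: "\<forall>s\<in>{0..1}. \<gamma> s \<noteq> 0 \<longrightarrow> exp (lt s) = \<gamma> s"
    and lt_bdd: "bounded (Im ` lt ` {s\<in>{0..1}. \<gamma> s \<noteq> 0})"
    and "Re c > 0" and "S \<subseteq> {0..1}"
  shows "continuous_on S (\<lambda>s. pw (\<gamma> s) (lt s) c)"
proof -
  have "continuous (at s0 within {0..1}) (\<lambda>s. pw (\<gamma> s) (lt s) c)" if s0: "s0 \<in> {0..1}" for s0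
  proof (cases "\<gamma> s0 = 0")
    case False
    obtain d where d: "d > 0"
        "\<And>s. s \<in> {0..1} \<Longrightarrow> \<bar>s - s0\<bar> < d \<Longrightarrow> \<gamma> s \<noteq> 0 \<and> lt s = lt s0 + Ln (\<gamma> s / \<gamma> s0)"
      using path_log_branch_eq_Ln[OF \<gamma> lt_cont lt_log s0 False] by blast
    have quot: "continuous (at s0 within {0..1}) (\<lambda>s. \<gamma> s / \<gamma> s0)"
      using \<gamma> s0 False by (intro continuous_intros) (auto simp: continuous_on_eq_continuous_within)
    have "isCont Ln (\<gamma> s0 / \<gamma> s0)"
      using False by (intro continuous_at_Ln) (simp add: nonpos_Reals_def)
    from continuous_within_compose3[OF this quot]
    have "continuous (at s0 within {0..1}) (\<lambda>s. Ln (\<gamma> s / \<gamma> s0))" .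
    then have "continuous (at s0 within {0..1}) (\<lambda>s. exp (c * (lt s0 + Ln (\<gamma> s / \<gamma> s0))))"
      by (intro continuous_intros)
    then show ?thesis
    proof (rule continuous_transform_within[OF _ d(1) s0])
      fix s assume "s \<in> {0..1}" "dist s s0 < d"
      then show "exp (c * (lt s0 + Ln (\<gamma> s / \<gamma> s0))) = pw (\<gamma> s) (lt s) c"
        using d(2) by (simp add: pw_def dist_real_def)
    qed
  next
    case True
    \<comment> \<open>Near a zero of the path the power tends to 0, because its argument part stays bounded.\<close>
    obtain B where B: "\<And>s. s \<in> {0..1} \<Longrightarrow> \<gamma> s \<noteq> 0 \<Longrightarrow> \<bar>Im (lt s)\<bar> \<le> B"
      using lt_bdd unfolding bounded_iff by fastforce
    have "(\<gamma> \<longlongrightarrow> \<gamma> s0) (at s0 within {0..1})"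
      using \<gamma> s0 by (simp add: continuous_on_def)
    then have "((\<lambda>s. norm (\<gamma> s)) \<longlongrightarrow> 0) (at s0 within {0..1})"
      using True tendsto_norm by fastforce
    then have "((\<lambda>s. norm (\<gamma> s) powr Re c * exp (\<bar>Im c\<bar> * B)) \<longlongrightarrow> 0) (at s0 within {0..1})"
      using \<open>Re c > 0\<close> by (intro tendsto_mult_left_zero tendsto_zero_powrI) auto
    moreover have "\<forall>\<^sub>F s in at s0 within {0..1}.
        norm (pw (\<gamma> s) (lt s) c) \<le> norm (\<gamma> s) powr Re c * exp (\<bar>Im c\<bar> * B)"
      unfolding eventually_at_filter
    proof (rule always_eventually, intro allI impI)
      fix s :: real assume "s \<in> {0..1}"
      then show "norm (pw (\<gamma> s) (lt s) c) \<le> norm (\<gamma> s) powr Re c * exp (\<bar>Im c\<bar> * B)"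
        using norm_pw_le[of "\<gamma> s" "lt s" B c] lt_log B[of s] by (cases "\<gamma> s = 0") (auto simp: pw_def)
    qed
    ultimately have "((\<lambda>s. pw (\<gamma> s) (lt s) c) \<longlongrightarrow> 0) (at s0 within {0..1})"
      by (rule Lim_null_comparison[rotated])
    then show ?thesis
      using True by (simp add: continuous_within pw_def)
  qed
  then show ?thesis
    using \<open>S \<subseteq> {0..1}\<close> continuous_on_eq_continuous_within continuous_within_subset by blast
qed

lemma has_vector_derivative_path_log_branch:
  fixes \<gamma> lt :: "real \<Rightarrow> complex"
  assumes \<gamma>: "continuous_on {0..1} \<gamma>"
    and lt_cont: "continuous_on {s\<in>{0..1}. \<gamma> s \<noteq> 0} lt"
    and lt_log: "\<forall>s\<in>{0..1}. \<gamma> s \<noteq> 0 \<longrightarrow> exp (lt s) = \<gamma> s"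
    and s: "s \<in> {0<..<1}" "\<gamma> s \<noteq> 0" and D: "(\<gamma> has_vector_derivative D) (at s)"
  shows "(lt has_vector_derivative D / \<gamma> s) (at s)"
proof -
  obtain d where d: "d > 0"
      "\<And>\<sigma>. \<sigma> \<in> {0..1} \<Longrightarrow> \<bar>\<sigma> - s\<bar> < d \<Longrightarrow> \<gamma> \<sigma> \<noteq> 0 \<and> lt \<sigma> = lt s + Ln (\<gamma> \<sigma> / \<gamma> s)"
  proof -
    have "s \<in> {0..1}"
      using s(1) by auto
    from path_log_branch_eq_Ln[OF \<gamma> lt_cont lt_log this s(2)] that show ?thesis
      by blast
  qed
  show ?thesis
  proof (rule has_vector_derivative_log_branch[OF D s(2)])
    show "min d (min s (1 - s)) > 0"
      using d(1) s(1) by simp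
    fix \<sigma> assume "\<bar>\<sigma> - s\<bar> < min d (min s (1 - s))"
    then show "lt \<sigma> = lt s + Ln (\<gamma> \<sigma> / \<gamma> s)"
      using d(2)[of \<sigma>] s(1) by (auto simp: abs_less_iff)
  qed
qed

section \<open>A primitive of t powr \<mu> * h t near 0\<close>

abbreviation real_cpow :: "complex \<Rightarrow> real \<Rightarrow> complex" where
  "real_cpow \<mu> \<rho> \<equiv> complex_of_real \<rho> powr \<mu>"

text \<open>For Re \<mu> > 0, t powr (\<mu> + 1) * radial_integral \<mu> h t is a primitive of t powr \<mu> * h t
  on any disc around 0 on which h is holomorphic.\<close>
definition radial_integral :: "complex \<Rightarrow> (complex \<Rightarrow> complex) \<Rightarrow> complex \<Rightarrow> complex" where
  "radial_integral \<mu> h t = integral {0..1} (\<lambda>\<rho>. real_cpow \<mu> \<rho> * h (of_real \<rho> * t))"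

lemma continuous_on_real_cpow:
  assumes "Re \<mu> > 0" "continuous_on S f" "f ` S \<subseteq> {0..}"
  shows "continuous_on S (\<lambda>x. real_cpow \<mu> (f x))"
proof -
  have "continuous_on {0..} (real_cpow \<mu>)"
    using assms(1) by (intro continuous_on_powr_complex) (auto intro!: continuous_intros)
  then show ?thesis
    using continuous_on_compose2 assms(2,3) by blast
qed

lemma of_real_mult_in_ball_0:
  assumes "t \<in> ball 0 R" "\<rho> \<in> {0..1}"
  shows "of_real \<rho> * t \<in> ball (0::complex) R"
proof -
  have "norm (of_real \<rho> * t) \<le> norm t"
    using assms(2) by (simp add: norm_mult mult_left_le_one_le)
  then show ?thesis
    using assms(1) by simp
qed

lemma continuous_on_radial_integrand:
  fixes h :: "complex \<Rightarrow> complex"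
  assumes "continuous_on (ball 0 R) h" "Re \<mu> > 0" "t \<in> ball 0 R"
  shows "continuous_on {0..1} (\<lambda>\<rho>. real_cpow \<mu> \<rho> * h (of_real \<rho> * t))"
proof -
  have "continuous_on {0..1} (\<lambda>\<rho>. h (of_real \<rho> * t))"
    by (rule continuous_on_compose2[OF assms(1)]) (auto intro!: continuous_intros of_real_mult_in_ball_0 assms(3))
  moreover have "continuous_on {0..1::real} (\<lambda>\<rho>. real_cpow \<mu> \<rho>)"
    using continuous_on_real_cpow[OF assms(2), of "{0..1}" "\<lambda>\<rho>. \<rho>"] by auto
  ultimately show ?thesis
    using continuous_on_mult by blast
qed

lemma has_field_derivative_radial_integral:
  fixes h :: "complex \<Rightarrow> complex"
  assumes hol: "h holomorphic_on ball 0 R" and "Re \<mu> > 0" and t: "t \<in> ball 0 R"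
  shows "(radial_integral \<mu> h has_field_derivative radial_integral (\<mu> + 1) (deriv h) t) (at t)"
proof -
  have "continuous_on (ball 0 R) (deriv h)" "continuous_on (ball 0 R) h"
    using holomorphic_deriv[OF hol open_ball] hol by (auto intro: holomorphic_on_imp_continuous_on)
  note cont = this
  have "((\<lambda>t. integral (cbox 0 1) (\<lambda>\<rho>. real_cpow \<mu> \<rho> * h (of_real \<rho> * t))) has_field_derivative
        integral (cbox 0 1) (\<lambda>\<rho>. real_cpow (\<mu> + 1) \<rho> * deriv h (of_real \<rho> * t))) (at t within ball 0 R)"
  proof (rule leibniz_rule_field_derivative[OF _ _ _ t convex_ball])
    fix x :: complex and \<rho> :: real assume x: "x \<in> ball 0 R" and \<rho>: "\<rho> \<in> cbox 0 1"
    have "(h has_field_derivative deriv h (of_real \<rho> * x)) (at (of_real \<rho> * x))"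
      using holomorphic_derivI[OF hol open_ball of_real_mult_in_ball_0[OF x]] \<rho> by simp
    from DERIV_chain2[OF this DERIV_cmult_Id[of "of_real \<rho>" x]]
    have "((\<lambda>x. real_cpow \<mu> \<rho> * h (of_real \<rho> * x)) has_field_derivative
            real_cpow \<mu> \<rho> * (deriv h (of_real \<rho> * x) * of_real \<rho>)) (at x)"
      by (rule DERIV_cmult)
    moreover have "real_cpow \<mu> \<rho> * (deriv h (of_real \<rho> * x) * of_real \<rho>)
        = real_cpow (\<mu> + 1) \<rho> * deriv h (of_real \<rho> * x)"
      using \<rho> by (cases "\<rho> = 0") (auto simp: powr_add)
    ultimately have "((\<lambda>x. real_cpow \<mu> \<rho> * h (of_real \<rho> * x)) has_field_derivative
            real_cpow (\<mu> + 1) \<rho> * deriv h (of_real \<rho> * x)) (at x)"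
      by simp
    then show "((\<lambda>x. real_cpow \<mu> \<rho> * h (of_real \<rho> * x)) has_field_derivative
            real_cpow (\<mu> + 1) \<rho> * deriv h (of_real \<rho> * x)) (at x within ball 0 R)"
      by (rule has_field_derivative_at_within)
  next
    fix x :: complex assume "x \<in> ball 0 R"
    then show "(\<lambda>\<rho>. real_cpow \<mu> \<rho> * h (of_real \<rho> * x)) integrable_on cbox 0 1"
      using continuous_on_radial_integrand[OF cont(2) \<open>Re \<mu> > 0\<close>] by (simp add: integrable_continuous_real)
  next
    have "continuous_on (ball 0 R \<times> cbox 0 1) (\<lambda>(x::complex, \<rho>::real). of_real \<rho> * x)"
      by (auto simp: split_beta intro!: continuous_intros)
    moreover have "(\<lambda>(x::complex, \<rho>::real). of_real \<rho> * x) ` (ball 0 R \<times> cbox 0 1) \<subseteq> ball 0 R"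
      using of_real_mult_in_ball_0 by auto
    ultimately have "continuous_on (ball 0 R \<times> cbox 0 1) (\<lambda>(x::complex, \<rho>::real). deriv h (of_real \<rho> * x))"
      using continuous_on_compose2[OF cont(1), of "ball 0 R \<times> cbox 0 1" "\<lambda>(x, \<rho>::real). of_real \<rho> * x"]
      by (simp add: split_beta)
    moreover have "continuous_on (ball 0 R \<times> cbox 0 1) (\<lambda>p::complex \<times> real. real_cpow (\<mu> + 1) (snd p))"
      using \<open>Re \<mu> > 0\<close> by (intro continuous_on_real_cpow continuous_intros) (auto simp: box_real)
    ultimately show "continuous_on (ball 0 R \<times> cbox 0 1) (\<lambda>(x, \<rho>). real_cpow (\<mu> + 1) \<rho> * deriv h (of_real \<rho> * x))"
      by (simp add: split_beta continuous_on_mult)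
  qed
  then show ?thesis
    unfolding radial_integral_def using at_within_open[OF t open_ball] by simp
qed

lemma radial_integral_ode:
  fixes h :: "complex \<Rightarrow> complex"
  assumes hol: "h holomorphic_on ball 0 R" and "Re \<mu> > 0" and t: "t \<in> ball 0 R"
  shows "(\<mu> + 1) * radial_integral \<mu> h t + t * radial_integral (\<mu> + 1) (deriv h) t = h t"
proof -
  have cont: "continuous_on (ball 0 R) (deriv h)" "continuous_on (ball 0 R) h"
    using holomorphic_deriv[OF hol open_ball] hol by (auto intro: holomorphic_on_imp_continuous_on)
  have \<mu>1: "Re (\<mu> + 1) > 0"
    using \<open>Re \<mu> > 0\<close> by simp
  define G where "G \<rho> = real_cpow (\<mu> + 1) \<rho> * h (of_real \<rho> * t)" for \<rho>
  define G' where "G' \<rho> = (\<mu> + 1) * (real_cpow \<mu> \<rho> * h (of_real \<rho> * t))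
                            + t * (real_cpow (\<mu> + 1) \<rho> * deriv h (of_real \<rho> * t))" for \<rho>
  have "(G' has_integral (G 1 - G 0)) {0..1}"
  proof (rule fundamental_theorem_of_calculus_interior_strong[of "{}"])
    fix \<rho> :: real assume \<rho>: "\<rho> \<in> {0<..<1} - {}"
    have "((\<lambda>z. z powr (\<mu> + 1)) has_field_derivative (\<mu> + 1) * of_real \<rho> powr (\<mu> + 1 - 1)) (at (of_real \<rho>))"
      using \<rho> by (intro has_field_derivative_powr) (auto simp: nonpos_Reals_def)
    from has_vector_derivative_real_field[OF this]
    have d1: "(real_cpow (\<mu> + 1) has_vector_derivative (\<mu> + 1) * real_cpow \<mu> \<rho>) (at \<rho>)"
      by simp
    have "((\<lambda>z. z * t) has_field_derivative t) (at (of_real \<rho>))"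
      using DERIV_cmult_right[OF DERIV_ident, of t "of_real \<rho>"] by simp
    from has_vector_derivative_real_field[OF this]
    have "((\<lambda>x. of_real x * t) has_vector_derivative t) (at \<rho>)"
      by simp
    from field_vector_diff_chain_at[OF this holomorphic_derivI[OF hol open_ball]]
    have d2: "((\<lambda>x. h (of_real x * t)) has_vector_derivative t * deriv h (of_real \<rho> * t)) (at \<rho>)"
      using of_real_mult_in_ball_0[OF t, of \<rho>] \<rho> by (simp add: o_def)
    from has_vector_derivative_mult[OF d1 d2]
    show "(G has_vector_derivative G' \<rho>) (at \<rho>)"
      unfolding G_def G'_def by (simp add: algebra_simps)
  next
    show "continuous_on {0..1} G"
      unfolding G_def by (rule continuous_on_radial_integrand[OF cont(2) \<mu>1 t])
  qed auto
  moreover have "G 1 - G 0 = h t"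
    by (simp add: G_def)
  moreover have "(\<lambda>\<rho>. real_cpow \<mu> \<rho> * h (of_real \<rho> * t)) integrable_on {0..1}"
    "(\<lambda>\<rho>. real_cpow (\<mu> + 1) \<rho> * deriv h (of_real \<rho> * t)) integrable_on {0..1}"
    using continuous_on_radial_integrand[OF cont(2) \<open>Re \<mu> > 0\<close> t]
      continuous_on_radial_integrand[OF cont(1) \<mu>1 t]
    by (simp_all add: integrable_continuous_real)
  then have "integral {0..1} G' = (\<mu> + 1) * radial_integral \<mu> h t + t * radial_integral (\<mu> + 1) (deriv h) t"
    unfolding G'_def radial_integral_def
    by (simp add: integral_add integrable_on_mult_right integral_mult_right)
  ultimately show ?thesis
    using integral_unique by metis
qed

lemma has_integral_pw_path_near_zero:
  fixes \<gamma> lt :: "real \<Rightarrow> complex" and h :: "complex \<Rightarrow> complex"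
  assumes hol: "h holomorphic_on ball 0 R" and "Re \<mu> > 0" and vp: "valid_path \<gamma>"
    and pq: "0 \<le> p" "p \<le> q" "q \<le> 1" and img: "\<gamma> ` {p..q} \<subseteq> ball 0 R"
    and nz: "\<forall>s\<in>{0<..<1}. \<gamma> s \<noteq> 0"
    and lt_cont: "continuous_on {s\<in>{0..1}. \<gamma> s \<noteq> 0} lt"
    and lt_log: "\<forall>s\<in>{0..1}. \<gamma> s \<noteq> 0 \<longrightarrow> exp (lt s) = \<gamma> s"
    and lt_bdd: "bounded (Im ` lt ` {s\<in>{0..1}. \<gamma> s \<noteq> 0})"
  defines "Q \<equiv> \<lambda>s. pw (\<gamma> s) (lt s) (\<mu> + 1) * radial_integral \<mu> h (\<gamma> s)"
  shows "((\<lambda>s. pw (\<gamma> s) (lt s) \<mu> * h (\<gamma> s) * path_deriv \<gamma> s) has_integral Q q - Q p) {p..q}"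
proof -
  obtain S where S: "finite S" "\<And>s. s \<in> {0<..<1} - S \<Longrightarrow> (\<gamma> has_vector_derivative path_deriv \<gamma> s) (at s)"
    using valid_path_has_path_deriv[OF vp] by blast
  have \<gamma>: "continuous_on {0..1} \<gamma>"
    using valid_path_continuous_on[OF vp] .
  show ?thesis
  proof (rule fundamental_theorem_of_calculus_interior_strong[OF S(1) pq(2)])
    fix s assume s: "s \<in> {p<..<q} - S"
    then have s01: "s \<in> {0<..<1} - S"
      using pq by auto
    then have gs: "\<gamma> s \<noteq> 0"
      using nz by auto
    have "s \<in> {p..q}"
      using s by auto
    then have sR: "\<gamma> s \<in> ball 0 R"
      using img by blast
    note D = S(2)[OF s01]
    have "(lt has_vector_derivative path_deriv \<gamma> s / \<gamma> s) (at s)"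
      using has_vector_derivative_path_log_branch[OF \<gamma> lt_cont lt_log _ gs D] s01 by blast
    from field_vector_diff_chain_at[OF has_vector_derivative_mult_right[OF this, of "\<mu> + 1"] DERIV_exp]
    have de: "((\<lambda>\<sigma>. exp ((\<mu> + 1) * lt \<sigma>)) has_vector_derivative
        (\<mu> + 1) * (path_deriv \<gamma> s / \<gamma> s) * exp ((\<mu> + 1) * lt s)) (at s)"
      by (simp add: o_def)
    from field_vector_diff_chain_at[OF D has_field_derivative_radial_integral[OF hol \<open>Re \<mu> > 0\<close> sR]]
    have dP: "((\<lambda>\<sigma>. radial_integral \<mu> h (\<gamma> \<sigma>)) has_vector_derivative
        path_deriv \<gamma> s * radial_integral (\<mu> + 1) (deriv h) (\<gamma> s)) (at s)"
      by (simp add: o_def)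
    have "exp ((\<mu> + 1) * lt s) = exp (\<mu> * lt s) * \<gamma> s"
      using lt_log s01 gs by (simp add: distrib_right exp_add)
    then have "exp ((\<mu> + 1) * lt s) * (path_deriv \<gamma> s * radial_integral (\<mu> + 1) (deriv h) (\<gamma> s))
        + (\<mu> + 1) * (path_deriv \<gamma> s / \<gamma> s) * exp ((\<mu> + 1) * lt s) * radial_integral \<mu> h (\<gamma> s)
      = exp (\<mu> * lt s) * path_deriv \<gamma> s
          * ((\<mu> + 1) * radial_integral \<mu> h (\<gamma> s) + \<gamma> s * radial_integral (\<mu> + 1) (deriv h) (\<gamma> s))"
      using gs by (simp add: field_simps)
    also have "\<dots> = pw (\<gamma> s) (lt s) \<mu> * h (\<gamma> s) * path_deriv \<gamma> s"
      using radial_integral_ode[OF hol \<open>Re \<mu> > 0\<close> sR] gs by (simp add: pw_def)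
    finally have "((\<lambda>\<sigma>. exp ((\<mu> + 1) * lt \<sigma>) * radial_integral \<mu> h (\<gamma> \<sigma>)) has_vector_derivative
        pw (\<gamma> s) (lt s) \<mu> * h (\<gamma> s) * path_deriv \<gamma> s) (at s)"
      using has_vector_derivative_mult[OF de dP] by simp
    then show "(Q has_vector_derivative pw (\<gamma> s) (lt s) \<mu> * h (\<gamma> s) * path_deriv \<gamma> s) (at s)"
    proof (rule has_vector_derivative_transform_within_open[OF _ open_greaterThanLessThan])
      show "s \<in> {p<..<q}"
        using s by auto
      fix \<sigma> assume "\<sigma> \<in> {p<..<q}"
      then have "\<gamma> \<sigma> \<noteq> 0"
        using nz pq by auto
      then show "exp ((\<mu> + 1) * lt \<sigma>) * radial_integral \<mu> h (\<gamma> \<sigma>) = Q \<sigma>"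
        by (simp add: Q_def pw_def)
    qed
  next
    have "continuous_on {p..q} (\<lambda>s. pw (\<gamma> s) (lt s) (\<mu> + 1))"
      using \<open>Re \<mu> > 0\<close> pq by (intro continuous_on_pw_path[OF \<gamma> lt_cont lt_log lt_bdd]) auto
    moreover have "continuous_on (ball 0 R) (radial_integral \<mu> h)"
      using has_field_derivative_radial_integral[OF hol \<open>Re \<mu> > 0\<close>]
      by (meson DERIV_isCont continuous_at_imp_continuous_on)
    then have "continuous_on {p..q} (\<lambda>s. radial_integral \<mu> h (\<gamma> s))"
      using continuous_on_compose2 continuous_on_subset[OF \<gamma>] img pq
      by (metis atLeastatMost_subset_iff order.refl)
    ultimately show "continuous_on {p..q} Q"
      unfolding Q_def by (rule continuous_on_mult)
  qed
qed

lemma radial_integral_param_deriv: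
  fixes H H' :: "complex \<Rightarrow> complex \<Rightarrow> complex"
  assumes Z: "open Z" "convex Z" "z0 \<in> Z" and t: "t \<in> ball 0 R" and "Re \<mu> > 0"
    and H_cont: "\<And>z. z \<in> Z \<Longrightarrow> continuous_on (ball 0 R) (H z)"
    and H: "\<And>z w. z \<in> Z \<Longrightarrow> w \<in> ball 0 R \<Longrightarrow> ((\<lambda>z. H z w) has_field_derivative H' z w) (at z)"
    and H'_cont: "continuous_on (Z \<times> ball 0 R) (\<lambda>(z, w). H' z w)"
  shows "((\<lambda>z. radial_integral \<mu> (H z) t) has_field_derivative radial_integral \<mu> (H' z0) t) (at z0)"
proof -
  have "((\<lambda>z. integral (cbox 0 1) (\<lambda>\<rho>. real_cpow \<mu> \<rho> * H z (of_real \<rho> * t))) has_field_derivative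
          integral (cbox 0 1) (\<lambda>\<rho>. real_cpow \<mu> \<rho> * H' z0 (of_real \<rho> * t))) (at z0 within Z)"
  proof (rule leibniz_rule_field_derivative[OF _ _ _ Z(3,2)])
    fix z and \<rho> :: real assume "z \<in> Z" "\<rho> \<in> cbox 0 1"
    with H of_real_mult_in_ball_0[OF t] have "((\<lambda>z. H z (of_real \<rho> * t)) has_field_derivative H' z (of_real \<rho> * t)) (at z)"
      by simp
    from DERIV_cmult[OF this, of "real_cpow \<mu> \<rho>"]
    show "((\<lambda>z. real_cpow \<mu> \<rho> * H z (of_real \<rho> * t)) has_field_derivative
            real_cpow \<mu> \<rho> * H' z (of_real \<rho> * t)) (at z within Z)"
      by (rule has_field_derivative_at_within)
  next
    fix z assume "z \<in> Z"
    show "(\<lambda>\<rho>. real_cpow \<mu> \<rho> * H z (of_real \<rho> * t)) integrable_on cbox 0 1"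
      using continuous_on_radial_integrand[OF H_cont[OF \<open>z \<in> Z\<close>] \<open>Re \<mu> > 0\<close> t]
      by (simp add: integrable_continuous_real)
  next
    have "continuous_on (Z \<times> cbox 0 1) (\<lambda>(z, \<rho>::real). (z, of_real \<rho> * t))"
      by (auto simp: split_beta intro!: continuous_intros)
    moreover have "(\<lambda>(z, \<rho>::real). (z, of_real \<rho> * t)) ` (Z \<times> cbox 0 1) \<subseteq> Z \<times> ball 0 R"
      using of_real_mult_in_ball_0[OF t] by auto
    ultimately have "continuous_on (Z \<times> cbox 0 1) (\<lambda>(z, \<rho>::real). H' z (of_real \<rho> * t))"
      using continuous_on_compose2[OF H'_cont, of "Z \<times> cbox 0 1" "\<lambda>(z, \<rho>::real). (z, of_real \<rho> * t)"]
      by (simp add: split_beta)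
    moreover have "continuous_on (Z \<times> cbox 0 1) (\<lambda>p::complex \<times> real. real_cpow \<mu> (snd p))"
      using \<open>Re \<mu> > 0\<close> by (intro continuous_on_real_cpow continuous_intros) (auto simp: box_real)
    ultimately show "continuous_on (Z \<times> cbox 0 1) (\<lambda>(z, \<rho>). real_cpow \<mu> \<rho> * H' z (of_real \<rho> * t))"
      by (simp add: split_beta continuous_on_mult)
  qed
  then show ?thesis
    unfolding radial_integral_def using at_within_open[OF Z(3,1)] by simp
qed

section \<open>Local differentiation under the integral sign\<close>

lemma param_integral_deriv_near_zero:
  fixes \<gamma> lt :: "real \<Rightarrow> complex" and H H' :: "complex \<Rightarrow> complex \<Rightarrow> complex"
  assumes vp: "valid_path \<gamma>" and nz: "\<forall>s\<in>{0<..<1}. \<gamma> s \<noteq> 0"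
    and lt_cont: "continuous_on {s\<in>{0..1}. \<gamma> s \<noteq> 0} lt"
    and lt_log: "\<forall>s\<in>{0..1}. \<gamma> s \<noteq> 0 \<longrightarrow> exp (lt s) = \<gamma> s"
    and lt_bdd: "bounded (Im ` lt ` {s\<in>{0..1}. \<gamma> s \<noteq> 0})"
    and \<mu>: "Re \<mu> > 0"
    and pq: "0 \<le> p" "p \<le> q" "q \<le> 1" and img: "\<gamma> ` {p..q} \<subseteq> ball 0 R" and "r > 0"
    and H_hol: "\<And>z. z \<in> ball z0 r \<Longrightarrow> H z holomorphic_on ball 0 R"
    and H: "\<And>z w. z \<in> ball z0 r \<Longrightarrow> w \<in> ball 0 R \<Longrightarrow> ((\<lambda>z. H z w) has_field_derivative H' z w) (at z)"
    and H'_cont: "continuous_on (ball z0 r \<times> ball 0 R) (\<lambda>(z, w). H' z w)"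
    and H'_hol: "H' z0 holomorphic_on ball 0 R"
    and \<phi>: "\<And>z s. z \<in> ball z0 r \<Longrightarrow> s \<in> {p..q} \<Longrightarrow> \<phi> z s = pw (\<gamma> s) (lt s) \<mu> * H z (\<gamma> s) * path_deriv \<gamma> s"
    and \<phi>': "\<And>s. s \<in> {p..q} \<Longrightarrow> \<phi>' s = pw (\<gamma> s) (lt s) \<mu> * H' z0 (\<gamma> s) * path_deriv \<gamma> s"
  shows "param_integral_deriv \<phi> \<phi>' z0 p q"
proof -
  define Q where "Q h s = pw (\<gamma> s) (lt s) (\<mu> + 1) * radial_integral \<mu> h (\<gamma> s)" for h s
  note prim = has_integral_pw_path_near_zero[OF _ \<mu> vp pq img nz lt_cont lt_log lt_bdd]
  show ?thesis
  proof (rule param_integral_derivI[OF \<open>r > 0\<close>])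
    fix z assume z: "z \<in> ball z0 r"
    show "(\<phi> z has_integral Q (H z) q - Q (H z) p) {p..q}"
      using prim[OF H_hol[OF z]] unfolding Q_def by (rule has_integral_eq[rotated]) (simp add: \<phi>[OF z])
  next
    show "(\<phi>' has_integral Q (H' z0) q - Q (H' z0) p) {p..q}"
      using prim[OF H'_hol] unfolding Q_def by (rule has_integral_eq[rotated]) (simp add: \<phi>')
  next
    have "q \<in> {p..q}" "p \<in> {p..q}"
      using pq by auto
    then have ends: "\<gamma> q \<in> ball 0 R" "\<gamma> p \<in> ball 0 R"
      using img by blast+
    have "continuous_on (ball 0 R) (H z)" if "z \<in> ball z0 r" for z
      using H_hol[OF that] by (rule holomorphic_on_imp_continuous_on)
    note param = radial_integral_param_deriv[OF open_ball convex_ball _ _ \<mu> this H H'_cont]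
    show "((\<lambda>z. Q (H z) q - Q (H z) p) has_field_derivative Q (H' z0) q - Q (H' z0) p) (at z0)"
      unfolding Q_def using \<open>r > 0\<close> ends by (intro DERIV_diff DERIV_cmult param) auto
  qed
qed

lemma param_integral_deriv_away_from_zero:
  fixes \<gamma> :: "real \<Rightarrow> complex" and H H' :: "complex \<Rightarrow> complex \<Rightarrow> complex"
  assumes vp: "valid_path \<gamma>" and "R \<le> norm c"
    and pq: "0 \<le> p" "p \<le> q" "q \<le> 1" and img: "\<gamma> ` {p..q} \<subseteq> ball c R" and "r > 0"
    and lt: "\<And>s. s \<in> {p..q} \<Longrightarrow> lt s = l + Ln (\<gamma> s / c)"
    and H_hol: "\<And>z. z \<in> ball z0 r \<Longrightarrow> H z holomorphic_on ball c R"
    and H: "\<And>z w. z \<in> ball z0 r \<Longrightarrow> w \<in> ball c R \<Longrightarrow> ((\<lambda>z. H z w) has_field_derivative H' z w) (at z)"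
    and H'_cont: "continuous_on (ball z0 r \<times> ball c R) (\<lambda>(z, w). H' z w)"
    and H'_hol: "H' z0 holomorphic_on ball c R"
    and \<phi>: "\<And>z s. z \<in> ball z0 r \<Longrightarrow> s \<in> {p..q} \<Longrightarrow> \<phi> z s = pw (\<gamma> s) (lt s) \<mu> * H z (\<gamma> s) * path_deriv \<gamma> s"
    and \<phi>': "\<And>s. s \<in> {p..q} \<Longrightarrow> \<phi>' s = pw (\<gamma> s) (lt s) \<mu> * H' z0 (\<gamma> s) * path_deriv \<gamma> s"
  shows "param_integral_deriv \<phi> \<phi>' z0 p q"
proof -
  \<comment> \<open>On a disc not containing 0 the branch of the power is a holomorphic function E.\<close>
  define E where "E t = exp (\<mu> * (l + Ln (t / c)))" for t
  have "t / c \<notin> \<real>\<^sub>\<le>\<^sub>0" if "t \<in> ball c R" for t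
    using that \<open>R \<le> norm c\<close> by (intro divide_notin_nonpos_Reals) (simp add: dist_norm norm_minus_commute)
  then have E_hol: "E holomorphic_on ball c R"
    unfolding E_def by (intro holomorphic_intros holomorphic_on_Ln') auto
  have E: "pw (\<gamma> s) (lt s) \<mu> = E (\<gamma> s)" if "s \<in> {p..q}" for s
  proof -
    have "\<gamma> s \<in> ball c R"
      using img that by blast
    then have "\<gamma> s \<noteq> 0"
      using \<open>R \<le> norm c\<close> by (auto simp: dist_norm)
    then show ?thesis
      using lt[OF that] by (simp add: pw_def E_def)
  qed
  have "p \<in> {p..q}" "q \<in> {p..q}"
    using pq by auto
  then have ends: "\<gamma> p \<in> ball c R" "\<gamma> q \<in> ball c R"
    using img by blast+
  note prim = has_integral_holomorphic_along_path[OF _ open_ball convex_ball vp pq img]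
  show ?thesis
  proof (rule param_integral_derivI[OF \<open>r > 0\<close>])
    fix z assume z: "z \<in> ball z0 r"
    have "(\<lambda>t. E t * H z t) holomorphic_on ball c R"
      using E_hol H_hol[OF z] by (intro holomorphic_intros)
    from prim[OF this]
    show "(\<phi> z has_integral contour_integral (linepath (\<gamma> p) (\<gamma> q)) (\<lambda>t. E t * H z t)) {p..q}"
      by (rule has_integral_eq[rotated]) (simp add: \<phi>[OF z] E)
  next
    have "(\<lambda>t. E t * H' z0 t) holomorphic_on ball c R"
      using E_hol H'_hol by (intro holomorphic_intros)
    from prim[OF this]
    show "(\<phi>' has_integral contour_integral (linepath (\<gamma> p) (\<gamma> q)) (\<lambda>t. E t * H' z0 t)) {p..q}"
      by (rule has_integral_eq[rotated]) (simp add: \<phi>' E)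
  next
    have "continuous_on (ball c R) E"
      using E_hol by (rule holomorphic_on_imp_continuous_on)
    then have "continuous_on (ball z0 r \<times> ball c R) (\<lambda>x. E (snd x))"
      by (rule continuous_on_compose2) (auto intro!: continuous_intros)
    then have F'_cont: "continuous_on (ball z0 r \<times> ball c R) (\<lambda>(z, w). E w * H' z w)"
      using continuous_on_mult[OF _ H'_cont] by (simp add: split_beta)
    have F_cont: "continuous_on (ball c R) (\<lambda>t. E t * H z t)" if "z \<in> ball z0 r" for z
      using H_hol[OF that] E_hol by (intro holomorphic_on_imp_continuous_on holomorphic_intros)
    have F: "((\<lambda>z. E w * H z w) has_field_derivative E w * H' z w) (at z)"
      if "z \<in> ball z0 r" "w \<in> ball c R" for z w
      using H[OF that] by (rule DERIV_cmult)
    have "z0 \<in> ball z0 r"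
      using \<open>r > 0\<close> by simp
    from contour_integral_linepath_param_deriv[OF open_ball convex_ball this
        closed_segment_subset[OF ends convex_ball] F F'_cont F_cont]
    show "((\<lambda>z. contour_integral (linepath (\<gamma> p) (\<gamma> q)) (\<lambda>t. E t * H z t)) has_field_derivative
          contour_integral (linepath (\<gamma> p) (\<gamma> q)) (\<lambda>t. E t * H' z0 t)) (at z0)" .
  qed
qed

lemma param_integral_deriv_local:
  fixes \<gamma> lt :: "real \<Rightarrow> complex" and H H' :: "complex \<Rightarrow> complex \<Rightarrow> complex"
  assumes vp: "valid_path \<gamma>" and nz: "\<forall>s\<in>{0<..<1}. \<gamma> s \<noteq> 0"
    and lt_cont: "continuous_on {s\<in>{0..1}. \<gamma> s \<noteq> 0} lt"
    and lt_log: "\<forall>s\<in>{0..1}. \<gamma> s \<noteq> 0 \<longrightarrow> exp (lt s) = \<gamma> s"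
    and lt_bdd: "bounded (Im ` lt ` {s\<in>{0..1}. \<gamma> s \<noteq> 0})"
    and \<mu>: "Re \<mu> > 0" and s0: "s0 \<in> {0..1}" and "R > 0" "r > 0" "e > 0"
    and H_hol: "\<And>z. z \<in> ball z0 r \<Longrightarrow> H z holomorphic_on ball (\<gamma> s0) R"
    and H: "\<And>z w. z \<in> ball z0 r \<Longrightarrow> w \<in> ball (\<gamma> s0) R \<Longrightarrow> ((\<lambda>z. H z w) has_field_derivative H' z w) (at z)"
    and H'_cont: "continuous_on (ball z0 r \<times> ball (\<gamma> s0) R) (\<lambda>(z, w). H' z w)"
    and H'_hol: "H' z0 holomorphic_on ball (\<gamma> s0) R"
    and \<phi>: "\<And>z s. z \<in> ball z0 r \<Longrightarrow> s \<in> {0..1} \<Longrightarrow> \<bar>s - s0\<bar> < e \<Longrightarrow>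
            \<phi> z s = pw (\<gamma> s) (lt s) \<mu> * H z (\<gamma> s) * path_deriv \<gamma> s"
    and \<phi>': "\<And>s. s \<in> {0..1} \<Longrightarrow> \<bar>s - s0\<bar> < e \<Longrightarrow>
            \<phi>' s = pw (\<gamma> s) (lt s) \<mu> * H' z0 (\<gamma> s) * path_deriv \<gamma> s"
  shows "\<exists>\<epsilon>>0. \<forall>p q. p \<in> {0..1} \<longrightarrow> q \<in> {0..1} \<longrightarrow> p \<le> q
      \<longrightarrow> \<bar>p - s0\<bar> < \<epsilon> \<longrightarrow> \<bar>q - s0\<bar> < \<epsilon> \<longrightarrow> param_integral_deriv \<phi> \<phi>' z0 p q"
proof -
  \<comment> \<open>Shrink the disc so that it avoids 0 unless it is centred at 0.\<close>
  define R' where "R' = (if \<gamma> s0 = 0 then R else min R (norm (\<gamma> s0)))"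
  have R': "R' > 0" "R' \<le> R" "\<gamma> s0 \<noteq> 0 \<Longrightarrow> R' \<le> norm (\<gamma> s0)"
    using \<open>R > 0\<close> by (auto simp: R'_def)
  have sub: "ball (\<gamma> s0) R' \<subseteq> ball (\<gamma> s0) R"
    using R' by auto
  obtain d where d: "d > 0" "\<And>s. s \<in> {0..1} \<Longrightarrow> dist s s0 < d \<Longrightarrow> dist (\<gamma> s) (\<gamma> s0) < R'"
    using valid_path_continuous_on[OF vp] s0 R'(1) unfolding continuous_on_iff by blast
  obtain d' where d': "d' > 0"
      "\<And>s. \<gamma> s0 \<noteq> 0 \<Longrightarrow> s \<in> {0..1} \<Longrightarrow> \<bar>s - s0\<bar> < d' \<Longrightarrow> lt s = lt s0 + Ln (\<gamma> s / \<gamma> s0)"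
  proof (cases "\<gamma> s0 = 0")
    case False
    then show ?thesis
      using path_log_branch_eq_Ln[OF valid_path_continuous_on[OF vp] lt_cont lt_log s0] that by blast
  qed (use that[of 1] in auto)
  have "param_integral_deriv \<phi> \<phi>' z0 p q"
    if pq: "p \<in> {0..1}" "q \<in> {0..1}" "p \<le> q" "\<bar>p - s0\<bar> < min e (min d d')" "\<bar>q - s0\<bar> < min e (min d d')"
    for p q
  proof -
    have near: "s \<in> {0..1}" "\<bar>s - s0\<bar> < e" "\<bar>s - s0\<bar> < d" "\<bar>s - s0\<bar> < d'" if "s \<in> {p..q}" for s
      using that pq by auto
    have img: "\<gamma> ` {p..q} \<subseteq> ball (\<gamma> s0) R'"
      using d(2) near by (force simp: dist_real_def dist_commute)
    have pq': "0 \<le> p" "q \<le> 1"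
      using pq by auto
    have H_hol': "H z holomorphic_on ball (\<gamma> s0) R'" if "z \<in> ball z0 r" for z
      using H_hol[OF that] sub by (rule holomorphic_on_subset)
    have H'_cont': "continuous_on (ball z0 r \<times> ball (\<gamma> s0) R') (\<lambda>(z, w). H' z w)"
      using H'_cont by (rule continuous_on_subset) (use sub in auto)
    have H'_hol': "H' z0 holomorphic_on ball (\<gamma> s0) R'"
      using H'_hol sub by (rule holomorphic_on_subset)
    have H': "((\<lambda>z. H z w) has_field_derivative H' z w) (at z)"
      if "z \<in> ball z0 r" "w \<in> ball (\<gamma> s0) R'" for z w
      using H that sub by blast
    have \<phi>_near: "\<phi> z s = pw (\<gamma> s) (lt s) \<mu> * H z (\<gamma> s) * path_deriv \<gamma> s"
      if "z \<in> ball z0 r" "s \<in> {p..q}" for z s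
      using \<phi>[OF that(1)] near[OF that(2)] by blast
    have \<phi>'_near: "\<phi>' s = pw (\<gamma> s) (lt s) \<mu> * H' z0 (\<gamma> s) * path_deriv \<gamma> s" if "s \<in> {p..q}" for s
      using \<phi>' near[OF that] by blast
    show ?thesis
    proof (cases "\<gamma> s0 = 0")
      case True
      note at_zero = H_hol' H' H'_cont' H'_hol'
      from param_integral_deriv_near_zero[OF vp nz lt_cont lt_log lt_bdd \<mu> pq'(1) pq(3) pq'(2)
          img[unfolded True] \<open>r > 0\<close> at_zero[unfolded True] \<phi>_near \<phi>'_near]
      show ?thesis .
    next
      case False
      have "lt s = lt s0 + Ln (\<gamma> s / \<gamma> s0)" if "s \<in> {p..q}" for s
        using d'(2)[OF False] near[OF that] by blast
      from param_integral_deriv_away_from_zero[OF vp R'(3)[OF False] pq'(1) pq(3) pq'(2) img \<open>r > 0\<close>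
          this H_hol' H' H'_cont' H'_hol' \<phi>_near \<phi>'_near]
      show ?thesis .
    qed
  qed
  then show ?thesis
    using \<open>e > 0\<close> d(1) d'(1) by (intro exI[of _ "min e (min d d')"]) auto
qed

section \<open>The integral \<Phi> and its partial derivatives\<close>

lemma continuous_on_upd1: "continuous_on UNIV (upd1 x i)"
proof -
  have "continuous_on UNIV (\<lambda>z. if j = i then z else fst x $ j)" for j
    by (cases "j = i") (auto intro!: continuous_intros)
  then show ?thesis
    unfolding upd1_def by (intro continuous_on_Pair continuous_on_vec_lambda continuous_on_const)
qed

lemma continuous_on_upd2: "continuous_on UNIV (upd2 x i)"
proof -
  have "continuous_on UNIV (\<lambda>z. if j = i then z else snd x $ j)" for j
    by (cases "j = i") (auto intro!: continuous_intros)
  then show ?thesis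
    unfolding upd2_def by (intro continuous_on_Pair continuous_on_vec_lambda continuous_on_const)
qed

lemma upd1_self: "upd1 x i (fst x $ i) = x"
  by (simp add: upd1_def vec_eq_iff prod_eq_iff)

lemma upd2_self: "upd2 x i (snd x $ i) = x"
  by (simp add: upd2_def vec_eq_iff prod_eq_iff)

lemma lin_upd1: "lin (upd1 x i z) k t = (if k = i then z + snd x $ k * t else lin x k t)"
  by (simp add: lin_def upd1_def)

lemma lin_upd2: "lin (upd2 x i z) k t = (if k = i then fst x $ k + z * t else lin x k t)"
  by (simp add: lin_def upd2_def)

lemma ex_delta_forall_finite:
  fixes P :: "'k::finite \<Rightarrow> 'a::metric_space \<Rightarrow> 'b::metric_space \<Rightarrow> bool"
  assumes "\<And>k. \<exists>d>0. \<forall>u v. dist u u0 < d \<longrightarrow> dist v v0 < d \<longrightarrow> P k u v"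
  shows "\<exists>d>0. \<forall>u v. dist u u0 < d \<longrightarrow> dist v v0 < d \<longrightarrow> (\<forall>k. P k u v)"
proof -
  obtain dk where dk: "\<And>k. dk k > 0 \<and> (\<forall>u v. dist u u0 < dk k \<longrightarrow> dist v v0 < dk k \<longrightarrow> P k u v)"
    using assms by metis
  have "Min (range dk) > 0" "\<And>k. Min (range dk) \<le> dk k"
    using dk by (auto simp: Min_gr_iff)
  then show ?thesis
    using dk by (meson less_le_trans)
qed

lemma has_field_derivative_exp_sum_Ln:
  fixes g :: "'n::finite \<Rightarrow> complex \<Rightarrow> complex" and \<alpha> c L D :: "'n \<Rightarrow> complex"
  assumes g: "\<And>k. (g k has_field_derivative D k) (at z)" and branch: "\<And>k. g k z / L k \<notin> \<real>\<^sub>\<le>\<^sub>0"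
  defines "F \<equiv> \<lambda>z. exp (\<Sum>k\<in>UNIV. \<alpha> k * (c k + Ln (g k z / L k)))"
  shows "(F has_field_derivative (\<Sum>k\<in>UNIV. \<alpha> k * (D k / g k z)) * F z) (at z)"
proof -
  have nz: "L k \<noteq> 0" "g k z \<noteq> 0" for k
    using branch[of k] by auto
  have "((\<lambda>z. \<alpha> k * (c k + Ln (g k z / L k))) has_field_derivative \<alpha> k * (D k / g k z)) (at z)" for k
  proof -
    have "(Ln has_field_derivative inverse (g k z / L k)) (at (g k z / L k))"
      using branch by (rule has_field_derivative_Ln)
    from DERIV_chain2[OF this DERIV_cdivide[OF g]]
    have "((\<lambda>z. Ln (g k z / L k)) has_field_derivative D k / g k z) (at z)"
      using nz by (simp add: field_simps)
    from DERIV_cmult[OF DERIV_add[OF DERIV_const this], of "\<alpha> k"]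
    show ?thesis
      by simp
  qed
  from DERIV_chain2[OF DERIV_exp DERIV_sum[OF this]]
  show ?thesis
    unfolding F_def by (simp add: mult.commute)
qed

locale euler_integral =
  fixes \<gamma> :: "real \<Rightarrow> complex" and lt :: "real \<Rightarrow> complex"
    and lL :: "'n::finite \<Rightarrow> (complex^'n) \<times> (complex^'n) \<Rightarrow> real \<Rightarrow> complex"
    and U :: "((complex^'n) \<times> (complex^'n)) set"
  assumes vp: "valid_path \<gamma>" and U_open: "open U"
    and avoid_t: "\<forall>s\<in>{0<..<1}. \<gamma> s \<noteq> 0"
    and avoid_L: "\<forall>y\<in>U. \<forall>s\<in>{0<..<1}. \<forall>i. lin y i (\<gamma> s) \<noteq> 0"
    and lt_cont: "continuous_on {s\<in>{0..1}. \<gamma> s \<noteq> 0} lt"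
    and lt_log: "\<forall>s\<in>{0..1}. \<gamma> s \<noteq> 0 \<longrightarrow> exp (lt s) = \<gamma> s"
    and lt_bdd: "bounded (Im ` lt ` {s\<in>{0..1}. \<gamma> s \<noteq> 0})"
    and lL_cont: "\<forall>i. continuous_on {(y, s). y \<in> U \<and> s \<in> {0..1} \<and> lin y i (\<gamma> s) \<noteq> 0}
                        (\<lambda>(y, s). lL i y s)"
    and lL_log: "\<forall>i. \<forall>y\<in>U. \<forall>s\<in>{0..1}. lin y i (\<gamma> s) \<noteq> 0 \<longrightarrow> exp (lL i y s) = lin y i (\<gamma> s)"
begin

lemma \<gamma>_cont: "continuous_on {0..1} \<gamma>"
  using valid_path_continuous_on[OF vp] .

text \<open>At the endpoints, a zero of a linear form could be moved into the interior by perturbing the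
  coordinate x_{1k} inside the open set U.\<close>
lemma lin_nonzero:
  assumes y: "y \<in> U" and s0: "s0 \<in> {0..1}"
  shows "lin y k (\<gamma> s0) \<noteq> 0"
proof
  assume zero: "lin y k (\<gamma> s0) = 0"
  have "open (upd1 y k -` U)"
    by (rule open_vimage[OF U_open continuous_on_upd1])
  moreover have "fst y $ k \<in> upd1 y k -` U"
    using y by (simp add: upd1_self)
  ultimately obtain e where e: "e > 0" "ball (fst y $ k) e \<subseteq> upd1 y k -` U"
    using open_contains_ball by blast
  define g where "g s = lin y k (\<gamma> s)" for s
  have "continuous_on {0..1} g"
    unfolding g_def lin_def using \<gamma>_cont by (intro continuous_intros)
  then obtain d where d: "d > 0" "\<And>s. s \<in> {0..1} \<Longrightarrow> dist s s0 < d \<Longrightarrow> dist (g s) (g s0) < e"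
    using s0 e(1) unfolding continuous_on_iff by blast
  have "s0 = 0 \<or> s0 = 1"
    using avoid_L y zero s0 by force
  define s' where "s' = (if s0 = 0 then min (d/2) (1/2) else 1 - min (d/2) (1/2))"
  have s': "s' \<in> {0<..<1}" "dist s' s0 < d"
    using d(1) \<open>s0 = 0 \<or> s0 = 1\<close> by (auto simp: s'_def dist_real_def)
  then have "norm (g s') < e"
    using d(2)[of s'] zero by (simp add: g_def dist_norm)
  then have "fst y $ k - g s' \<in> ball (fst y $ k) e"
    by (simp add: dist_norm)
  then have "upd1 y k (fst y $ k - g s') \<in> U"
    using e(2) by blast
  moreover have "lin (upd1 y k (fst y $ k - g s')) k (\<gamma> s') = 0"
    unfolding lin_upd1 by (simp add: g_def lin_def)
  ultimately show False
    using avoid_L s'(1) by blast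
qed

end

lemma norm_lin_diff_less_near:
  fixes ups :: "complex \<Rightarrow> (complex^'n::finite) \<times> (complex^'n)"
  assumes ups: "continuous_on UNIV ups" "ups z0 = x" and nz: "\<And>k. lin x k c \<noteq> 0"
  shows "\<exists>\<rho>>0. \<forall>z t. dist z z0 < \<rho> \<longrightarrow> dist t c < \<rho> \<longrightarrow>
           (\<forall>k. norm (lin (ups z) k t - lin x k c) < norm (lin x k c))"
proof (rule ex_delta_forall_finite)
  fix k :: 'n
  have "continuous_on UNIV (\<lambda>p::complex \<times> complex. lin (ups (fst p)) k (snd p))"
    unfolding lin_def by (intro continuous_intros continuous_on_compose2[OF ups(1)]) auto
  then have cont: "isCont (\<lambda>p::complex \<times> complex. lin (ups (fst p)) k (snd p)) (z0, c)"
    by (simp add: continuous_on_eq_continuous_at)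
  have "norm (lin x k c) > 0"
    using nz[of k] by simp
  from cont[unfolded continuous_at_eps_delta, rule_format, OF this]
  obtain d where d: "d > 0"
      "\<And>p. dist p (z0, c) < d \<Longrightarrow> dist (lin (ups (fst p)) k (snd p)) (lin x k c) < norm (lin x k c)"
    using ups(2) by auto
  have "norm (lin (ups z) k t - lin x k c) < norm (lin x k c)" if "dist z z0 < d/2" "dist t c < d/2" for z t
  proof -
    have "dist (z, t) (z0, c) \<le> dist z z0 + dist t c"
      unfolding dist_Pair_Pair by (rule sqrt_sum_squares_le_sum) auto
    then show ?thesis
      using d(2)[of "(z, t)"] that by (simp add: dist_norm)
  qed
  then show "\<exists>d>0. \<forall>z t. dist z z0 < d \<longrightarrow> dist t c < d \<longrightarrow> norm (lin (ups z) k t - lin x k c) < norm (lin x k c)"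
    using d(1) by (intro exI[of _ "d/2"]) auto
qed

lemma prod_pw_eq_exp_sum:
  fixes L l a :: "'n::finite \<Rightarrow> complex"
  assumes "\<And>k. L k \<noteq> 0"
  shows "(\<Prod>k\<in>UNIV. pw (L k) (l k) (a k)) = exp (\<Sum>k\<in>UNIV. a k * l k)"
  using assms by (simp add: pw_def exp_sum)

lemma sum_minus_axis:
  fixes \<alpha> :: "complex^'n::finite"
  shows "(\<Sum>k\<in>UNIV. (\<alpha> - axis i 1) $ k * l k) = (\<Sum>k\<in>UNIV. \<alpha> $ k * l k) - l i"
proof -
  have "(\<Sum>k\<in>UNIV. (\<alpha> - axis i 1) $ k * l k) = (\<Sum>k\<in>UNIV. \<alpha> $ k * l k - (if k = i then l k else 0))"
    by (rule sum.cong) (auto simp: axis_def algebra_simps)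
  then show ?thesis
    by (simp add: sum_subtractf)
qed

context euler_integral
begin

lemma lL_eq_Ln_near:
  assumes ups: "continuous_on UNIV ups" "ups z0 = x" and x: "x \<in> U" and s1: "s1 \<in> {0..1}"
  shows "\<exists>d>0. \<forall>z s. dist z z0 < d \<longrightarrow> dist s s1 < d \<longrightarrow> s \<in> {0..1} \<longrightarrow>
           ups z \<in> U \<and> lL k (ups z) s = lL k x s1 + Ln (lin (ups z) k (\<gamma> s) / lin x k (\<gamma> s1))"
proof -
  define Z where "Z = ups -` U"
  have "open Z" "z0 \<in> Z"
    using open_vimage[OF U_open ups(1)] ups(2) x by (auto simp: Z_def)
  define A where "A = Z \<times> {0..1::real}"
  have pair: "continuous_on A (\<lambda>p. (ups (fst p), snd p))"
    by (intro continuous_intros continuous_on_compose2[OF ups(1)]) auto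
  have "(\<lambda>p. (ups (fst p), snd p)) ` A \<subseteq> {(y, s). y \<in> U \<and> s \<in> {0..1} \<and> lin y k (\<gamma> s) \<noteq> 0}"
    using lin_nonzero by (auto simp: A_def Z_def)
  from continuous_on_compose2[OF lL_cont[rule_format, of k] pair this]
  have l: "continuous_on A (\<lambda>p. lL k (ups (fst p)) (snd p))"
    by (simp add: split_beta)
  have "continuous_on A (\<lambda>p. \<gamma> (snd p))"
    by (rule continuous_on_compose2[OF \<gamma>_cont]) (auto simp: A_def intro!: continuous_intros)
  moreover have "continuous_on A (\<lambda>p. ups (fst p))"
    by (rule continuous_on_compose2[OF ups(1)]) (auto intro!: continuous_intros)
  ultimately have w: "continuous_on A (\<lambda>p. lin (ups (fst p)) k (\<gamma> (snd p)))"
    unfolding lin_def by (intro continuous_intros)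
  have "exp (lL k (ups (fst p)) (snd p)) = lin (ups (fst p)) k (\<gamma> (snd p))" if "p \<in> A" for p
    using lL_log lin_nonzero that by (auto simp: A_def Z_def)
  moreover have "(z0, s1) \<in> A"
    using \<open>z0 \<in> Z\<close> s1 by (simp add: A_def)
  ultimately obtain d1 where d1: "d1 > 0" "\<And>p. p \<in> A \<Longrightarrow> dist p (z0, s1) < d1 \<Longrightarrow>
      lL k (ups (fst p)) (snd p) = lL k x s1 + Ln (lin (ups (fst p)) k (\<gamma> (snd p)) / lin x k (\<gamma> s1))"
    using continuous_log_branch_eq_Ln[OF l w] ups(2) by (metis fst_conv snd_conv)
  obtain d2 where d2: "d2 > 0" "ball z0 d2 \<subseteq> Z"
    using \<open>open Z\<close> \<open>z0 \<in> Z\<close> open_contains_ball by blast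
  have "ups z \<in> U \<and> lL k (ups z) s = lL k x s1 + Ln (lin (ups z) k (\<gamma> s) / lin x k (\<gamma> s1))"
    if "dist z z0 < min (d1/2) d2" "dist s s1 < min (d1/2) d2" "s \<in> {0..1}" for z s
  proof -
    have "z \<in> Z"
      using that(1) d2(2) by (auto simp: dist_commute)
    moreover have "dist (z, s) (z0, s1) \<le> dist z z0 + dist s s1"
      unfolding dist_Pair_Pair by (rule sqrt_sum_squares_le_sum) auto
    ultimately show ?thesis
      using d1(2)[of "(z, s)"] that by (auto simp: A_def Z_def)
  qed
  with d1(1) d2(1) show ?thesis
    by (intro exI[of _ "min (d1/2) d2"]) auto
qed

text \<open>Along an affine line z \<mapsto> ups z in the coordinates of x, the integrand near t = \<gamma> s1 has the
  form pw (\<gamma> s) (lt s) (-\<delta>-1) * H z (\<gamma> s), where H is built from principal logarithms and hence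
  holomorphic in both variables.\<close>
lemma Phi_param_deriv_local:
  fixes \<alpha> :: "complex^'n" and ups :: "complex \<Rightarrow> (complex^'n) \<times> (complex^'n)"
  assumes x: "x \<in> U" and \<delta>: "Re (- \<delta> - 1) > 0" and s1: "s1 \<in> {0..1}"
    and ups: "continuous_on UNIV ups" "ups z0 = x"
    and ups_other: "\<And>z k t. k \<noteq> i \<Longrightarrow> lin (ups z) k t = lin x k t"
    and ups_i: "\<And>z t. lin (ups z) i t = (a1 + z * b1) + (a2 + z * b2) * t"
  defines "\<phi> \<equiv> \<lambda>z s. integrand \<gamma> lt lL \<alpha> \<delta> (ups z) s * path_deriv \<gamma> s"
    and "\<phi>' \<equiv> \<lambda>s. \<alpha> $ i * ((b1 + b2 * \<gamma> s) * integrand \<gamma> lt lL (\<alpha> - axis i 1) \<delta> x s) * path_deriv \<gamma> s"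
  shows "\<exists>\<epsilon>>0. \<forall>p q. p \<in> {0..1} \<longrightarrow> q \<in> {0..1} \<longrightarrow> p \<le> q
           \<longrightarrow> \<bar>p - s1\<bar> < \<epsilon> \<longrightarrow> \<bar>q - s1\<bar> < \<epsilon> \<longrightarrow> param_integral_deriv \<phi> \<phi>' z0 p q"
proof -
  define L0 where "L0 k = lin x k (\<gamma> s1)" for k
  have L0: "L0 k \<noteq> 0" for k
    using lin_nonzero x s1 by (simp add: L0_def)
  obtain \<rho> where \<rho>: "\<rho> > 0"
      "\<And>z t k. dist z z0 < \<rho> \<Longrightarrow> dist t (\<gamma> s1) < \<rho> \<Longrightarrow> norm (lin (ups z) k t - L0 k) < norm (L0 k)"
    using norm_lin_diff_less_near[OF ups, of "\<gamma> s1"] L0 unfolding L0_def by blast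
  obtain d where d: "d > 0" "\<And>z s k. dist z z0 < d \<Longrightarrow> dist s s1 < d \<Longrightarrow> s \<in> {0..1} \<Longrightarrow>
      ups z \<in> U \<and> lL k (ups z) s = lL k x s1 + Ln (lin (ups z) k (\<gamma> s) / L0 k)"
    using ex_delta_forall_finite[of z0 s1 "\<lambda>k z s. s \<in> {0..1} \<longrightarrow> ups z \<in> U \<and>
        lL k (ups z) s = lL k x s1 + Ln (lin (ups z) k (\<gamma> s) / L0 k)"]
      lL_eq_Ln_near[OF ups x s1] unfolding L0_def by metis
  define r where "r = min \<rho> d"
  have "r > 0" "z0 \<in> ball z0 r"
    using \<rho>(1) d(1) by (auto simp: r_def)
  define H where "H z t = exp (\<Sum>k\<in>UNIV. \<alpha> $ k * (lL k x s1 + Ln (lin (ups z) k t / L0 k)))" for z t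
  define H' where "H' z t = \<alpha> $ i * (b1 + b2 * t) / lin (ups z) i t * H z t" for z t
  have branch: "lin (ups z) k t / L0 k \<notin> \<real>\<^sub>\<le>\<^sub>0" "lin (ups z) k t \<noteq> 0"
    if "z \<in> ball z0 r" "t \<in> ball (\<gamma> s1) \<rho>" for z t k
  proof -
    have "norm (lin (ups z) k t - L0 k) < norm (L0 k)"
      using \<rho>(2) that by (auto simp: r_def dist_commute)
    then show "lin (ups z) k t / L0 k \<notin> \<real>\<^sub>\<le>\<^sub>0" "lin (ups z) k t \<noteq> 0"
      using divide_notin_nonpos_Reals by auto
  qed
  have H_hol: "H z holomorphic_on ball (\<gamma> s1) \<rho>" if "z \<in> ball z0 r" for z
    unfolding H_def using branch[OF that] L0
    by (intro holomorphic_intros holomorphic_on_sum holomorphic_on_Ln') (auto simp: lin_def intro!: holomorphic_intros)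
  have H'_hol: "H' z0 holomorphic_on ball (\<gamma> s1) \<rho>"
    unfolding H'_def lin_def using branch[OF \<open>z0 \<in> ball z0 r\<close>]
    by (intro holomorphic_intros H_hol[OF \<open>z0 \<in> ball z0 r\<close>]) (auto simp: lin_def)
  have H: "((\<lambda>z. H z w) has_field_derivative H' z w) (at z)"
    if "z \<in> ball z0 r" "w \<in> ball (\<gamma> s1) \<rho>" for z w
  proof -
    define D where "D k = (if k = i then b1 + b2 * w else 0)" for k
    have "((\<lambda>z. lin (ups z) k w) has_field_derivative D k) (at z)" for k
    proof (cases "k = i")
      case True
      have "((\<lambda>z. (a1 + z * b1) + (a2 + z * b2) * w) has_field_derivative b1 + b2 * w) (at z)"
        by (rule derivative_eq_intros refl | simp add: field_simps)+
      then show ?thesis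
        using True by (simp add: D_def ups_i)
    qed (simp add: D_def ups_other)
    from has_field_derivative_exp_sum_Ln[OF this branch(1)[OF that]]
    have "((\<lambda>z. H z w) has_field_derivative
            (\<Sum>k\<in>UNIV. \<alpha> $ k * (D k / lin (ups z) k w)) * H z w) (at z)"
      unfolding H_def .
    moreover have "(\<Sum>k\<in>UNIV. \<alpha> $ k * (D k / lin (ups z) k w))
        = (\<Sum>k\<in>UNIV. if k = i then \<alpha> $ i * ((b1 + b2 * w) / lin (ups z) i w) else 0)"
      by (rule sum.cong) (auto simp: D_def)
    ultimately show ?thesis
      by (simp add: H'_def)
  qed
  have H'_cont: "continuous_on (ball z0 r \<times> ball (\<gamma> s1) \<rho>) (\<lambda>(z, w). H' z w)"
  proof -
    define P where "P = ball z0 r \<times> ball (\<gamma> s1) \<rho>"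
    have lin_cont: "continuous_on P (\<lambda>p. lin (ups (fst p)) k (snd p))" for k
      unfolding lin_def by (intro continuous_intros continuous_on_compose2[OF ups(1)]) auto
    have "continuous_on P (\<lambda>p. Ln (lin (ups (fst p)) k (snd p) / L0 k))" for k
      using branch L0 by (intro continuous_on_Ln' continuous_intros lin_cont) (auto simp: P_def)
    then have "continuous_on P (\<lambda>p. \<alpha> $ k * (lL k x s1 + Ln (lin (ups (fst p)) k (snd p) / L0 k)))" for k
      by (intro continuous_on_mult_left continuous_on_add continuous_on_const)
    then have "continuous_on P (\<lambda>p. H (fst p) (snd p))"
      unfolding H_def by (intro continuous_on_exp continuous_on_sum)
    then have "continuous_on P (\<lambda>p. H' (fst p) (snd p))"
      unfolding H'_def using branch by (intro continuous_intros lin_cont) (auto simp: P_def)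
    then show ?thesis
      by (simp add: P_def split_beta)
  qed
  have \<phi>: "\<phi> z s = pw (\<gamma> s) (lt s) (- \<delta> - 1) * H z (\<gamma> s) * path_deriv \<gamma> s"
    if "z \<in> ball z0 r" "s \<in> {0..1}" "\<bar>s - s1\<bar> < d" for z s
  proof -
    have "dist z z0 < d" "dist s s1 < d"
      using that by (auto simp: r_def dist_commute dist_real_def)
    note near = d(2)[OF this that(2)]
    have "(\<Prod>k\<in>UNIV. pw (lin (ups z) k (\<gamma> s)) (lL k (ups z) s) (\<alpha> $ k)) = H z (\<gamma> s)"
      unfolding H_def using lin_nonzero near that(2) by (simp add: prod_pw_eq_exp_sum)
    then show ?thesis
      by (simp add: \<phi>_def integrand_def)
  qed
  have \<phi>': "\<phi>' s = pw (\<gamma> s) (lt s) (- \<delta> - 1) * H' z0 (\<gamma> s) * path_deriv \<gamma> s"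
    if "s \<in> {0..1}" "\<bar>s - s1\<bar> < d" for s
  proof -
    have "dist z0 z0 < d" "dist s s1 < d"
      using that d(1) by (auto simp: dist_real_def)
    note near = d(2)[OF this that(1), unfolded ups(2)]
    have ex: "exp (lL i x s) = lin x i (\<gamma> s)"
      using lL_log lin_nonzero x that(1) by blast
    have "(\<Prod>k\<in>UNIV. pw (lin x k (\<gamma> s)) (lL k x s) ((\<alpha> - axis i 1) $ k))
        = exp (\<Sum>k\<in>UNIV. (\<alpha> - axis i 1) $ k * lL k x s)"
      using lin_nonzero x that(1) by (simp add: prod_pw_eq_exp_sum)
    also have "\<dots> = exp ((\<Sum>k\<in>UNIV. \<alpha> $ k * lL k x s) - lL i x s)"
      unfolding sum_minus_axis ..
    also have "\<dots> = H z0 (\<gamma> s) / lin x i (\<gamma> s)"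
      unfolding exp_diff ex using near by (simp add: H_def ups(2))
    finally have prod: "(\<Prod>k\<in>UNIV. pw (lin x k (\<gamma> s)) (lL k x s) ((\<alpha> - axis i 1) $ k))
        = H z0 (\<gamma> s) / lin x i (\<gamma> s)" .
    show ?thesis
      unfolding \<phi>'_def integrand_def prod H'_def ups(2) by (simp add: field_simps)
  qed
  show ?thesis
    using param_integral_deriv_local[OF vp avoid_t lt_cont lt_log lt_bdd \<delta> s1 \<rho>(1) \<open>r > 0\<close> d(1)
        H_hol H H'_cont H'_hol \<phi> \<phi>'] .
qed

end

lemma pw_mult_self:
  assumes "w \<noteq> 0 \<Longrightarrow> exp l = w"
  shows "w * pw w l c = pw w l (c + 1)"
proof (cases "w = 0")
  case False
  then have "w * exp (c * l) = exp ((c + 1) * l)"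
    using assms by (simp add: distrib_right exp_add)
  then show ?thesis
    using False by (simp add: pw_def)
qed (simp add: pw_def)

context euler_integral
begin

lemma has_field_derivative_Phi_affine:
  fixes \<alpha> :: "complex^'n" and ups :: "complex \<Rightarrow> (complex^'n) \<times> (complex^'n)"
  assumes x: "x \<in> U" and \<delta>: "Re (- \<delta> - 1) > 0"
    and ups: "continuous_on UNIV ups" "ups z0 = x"
    and ups_other: "\<And>z k t. k \<noteq> i \<Longrightarrow> lin (ups z) k t = lin x k t"
    and ups_i: "\<And>z t. lin (ups z) i t = (a1 + z * b1) + (a2 + z * b2) * t"
  shows "((\<lambda>z. Phi \<gamma> lt lL \<alpha> \<delta> (ups z)) has_field_derivative
          integral {0..1} (\<lambda>s. \<alpha> $ i * ((b1 + b2 * \<gamma> s) * integrand \<gamma> lt lL (\<alpha> - axis i 1) \<delta> x s)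
                               * path_deriv \<gamma> s)) (at z0)"
    and "(\<lambda>s. integrand \<gamma> lt lL \<alpha> \<delta> x s * path_deriv \<gamma> s) integrable_on {0..1}"
proof -
  define \<phi> where "\<phi> z s = integrand \<gamma> lt lL \<alpha> \<delta> (ups z) s * path_deriv \<gamma> s" for z s
  define \<phi>' where "\<phi>' s = \<alpha> $ i * ((b1 + b2 * \<gamma> s) * integrand \<gamma> lt lL (\<alpha> - axis i 1) \<delta> x s)
                           * path_deriv \<gamma> s" for s
  have "param_integral_deriv \<phi> \<phi>' z0 0 1"
  proof (rule interval_property_local_to_global)
    fix s1 :: real assume "s1 \<in> {0..1}"
    from Phi_param_deriv_local[OF x \<delta> this ups ups_other ups_i]
    show "\<exists>\<epsilon>>0. \<forall>p q. p \<in> {0..1} \<longrightarrow> q \<in> {0..1} \<longrightarrow> p \<le> q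
            \<longrightarrow> \<bar>p - s1\<bar> < \<epsilon> \<longrightarrow> \<bar>q - s1\<bar> < \<epsilon> \<longrightarrow> param_integral_deriv \<phi> \<phi>' z0 p q"
      unfolding \<phi>_def \<phi>'_def .
  qed (auto intro: param_integral_deriv_refl param_integral_deriv_combine)
  then have "((\<lambda>z. integral {0..1} (\<phi> z)) has_field_derivative integral {0..1} \<phi>') (at z0)"
    "\<phi> z0 integrable_on {0..1}"
    unfolding param_integral_deriv_def using eventually_nhds_x_imp_x by blast+
  then show "((\<lambda>z. Phi \<gamma> lt lL \<alpha> \<delta> (ups z)) has_field_derivative
          integral {0..1} (\<lambda>s. \<alpha> $ i * ((b1 + b2 * \<gamma> s) * integrand \<gamma> lt lL (\<alpha> - axis i 1) \<delta> x s)
                               * path_deriv \<gamma> s)) (at z0)"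
    "(\<lambda>s. integrand \<gamma> lt lL \<alpha> \<delta> x s * path_deriv \<gamma> s) integrable_on {0..1}"
    unfolding \<phi>_def \<phi>'_def Phi_def ups(2) by simp_all
qed

lemma has_integral_Phi:
  assumes "x \<in> U" "Re (- \<delta> - 1) > 0"
  shows "((\<lambda>s. integrand \<gamma> lt lL \<alpha> \<delta> x s * path_deriv \<gamma> s) has_integral Phi \<gamma> lt lL \<alpha> \<delta> x) {0..1}"
proof -
  define i :: 'n where "i = undefined"
  have other: "\<And>z k t. k \<noteq> i \<Longrightarrow> lin (upd1 x i z) k t = lin x k t"
    by (simp add: lin_upd1)
  have "\<And>z t. lin (upd1 x i z) i t = (0 + z * 1) + (snd x $ i + z * 0) * t"
    by (simp add: lin_upd1)
  from has_field_derivative_Phi_affine(2)[OF assms continuous_on_upd1 upd1_self other this]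
  have "(\<lambda>s. integrand \<gamma> lt lL \<alpha> \<delta> x s * path_deriv \<gamma> s) integrable_on {0..1}" .
  then show ?thesis
    unfolding Phi_def by (rule integrable_integral)
qed

lemma has_field_derivative_Phi_upd1:
  assumes "x \<in> U" "Re (- \<delta> - 1) > 0"
  shows "((\<lambda>z. Phi \<gamma> lt lL \<alpha> \<delta> (upd1 x i z)) has_field_derivative
           \<alpha> $ i * Phi \<gamma> lt lL (\<alpha> - axis i 1) \<delta> x) (at (fst x $ i))"
proof -
  have "integral {0..1} (\<lambda>s. \<alpha> $ i * ((1 + 0 * \<gamma> s) * integrand \<gamma> lt lL (\<alpha> - axis i 1) \<delta> x s)
                               * path_deriv \<gamma> s)
      = \<alpha> $ i * Phi \<gamma> lt lL (\<alpha> - axis i 1) \<delta> x"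
    unfolding Phi_def by (simp add: mult.assoc integral_mult_right)
  moreover have other: "\<And>z k t. k \<noteq> i \<Longrightarrow> lin (upd1 x i z) k t = lin x k t"
    by (simp add: lin_upd1)
  moreover have "\<And>z t. lin (upd1 x i z) i t = (0 + z * 1) + (snd x $ i + z * 0) * t"
    by (simp add: lin_upd1)
  note has_field_derivative_Phi_affine(1)[where \<alpha> = \<alpha>, OF assms continuous_on_upd1 upd1_self other this]
  ultimately show ?thesis
    by simp
qed

lemma has_field_derivative_Phi_upd2:
  assumes "x \<in> U" "Re (- \<delta> - 1) > 0"
  shows "((\<lambda>z. Phi \<gamma> lt lL \<alpha> \<delta> (upd2 x i z)) has_field_derivative
           \<alpha> $ i * Phi \<gamma> lt lL (\<alpha> - axis i 1) (\<delta> - 1) x) (at (snd x $ i))"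
proof -
  have "\<gamma> s * integrand \<gamma> lt lL \<beta> \<delta> x s = integrand \<gamma> lt lL \<beta> (\<delta> - 1) x s" if "s \<in> {0..1}" for s \<beta>
    using pw_mult_self[of "\<gamma> s" "lt s" "- \<delta> - 1"] lt_log that
    by (simp add: integrand_def mult.assoc[symmetric])
  then have "integral {0..1} (\<lambda>s. \<alpha> $ i * ((0 + 1 * \<gamma> s) * integrand \<gamma> lt lL (\<alpha> - axis i 1) \<delta> x s)
                               * path_deriv \<gamma> s)
      = integral {0..1} (\<lambda>s. \<alpha> $ i * (integrand \<gamma> lt lL (\<alpha> - axis i 1) (\<delta> - 1) x s * path_deriv \<gamma> s))"
    by (intro integral_cong) simp
  also have "\<dots> = \<alpha> $ i * Phi \<gamma> lt lL (\<alpha> - axis i 1) (\<delta> - 1) x"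
    unfolding Phi_def by (simp add: integral_mult_right)
  finally have "integral {0..1} (\<lambda>s. \<alpha> $ i * ((0 + 1 * \<gamma> s) * integrand \<gamma> lt lL (\<alpha> - axis i 1) \<delta> x s)
                               * path_deriv \<gamma> s)
      = \<alpha> $ i * Phi \<gamma> lt lL (\<alpha> - axis i 1) (\<delta> - 1) x" .
  moreover have other: "\<And>z k t. k \<noteq> i \<Longrightarrow> lin (upd2 x i z) k t = lin x k t"
    by (simp add: lin_upd2)
  moreover have "\<And>z t. lin (upd2 x i z) i t = (fst x $ i + z * 0) + (0 + z * 1) * t"
    by (simp add: lin_upd2)
  note has_field_derivative_Phi_affine(1)[where \<alpha> = \<alpha>, OF assms continuous_on_upd2 upd2_self other this]
  ultimately show ?thesis
    by simp
qed

lemma pd1_Phi: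
  assumes "x \<in> U" "Re (- \<delta> - 1) > 0"
  shows "pd1 (Phi \<gamma> lt lL \<alpha> \<delta>) i x = \<alpha> $ i * Phi \<gamma> lt lL (\<alpha> - axis i 1) \<delta> x"
  unfolding pd1_def by (rule DERIV_imp_deriv[OF has_field_derivative_Phi_upd1[OF assms]])

lemma pd2_Phi:
  assumes "x \<in> U" "Re (- \<delta> - 1) > 0"
  shows "pd2 (Phi \<gamma> lt lL \<alpha> \<delta>) i x = \<alpha> $ i * Phi \<gamma> lt lL (\<alpha> - axis i 1) (\<delta> - 1) x"
  unfolding pd2_def by (rule DERIV_imp_deriv[OF has_field_derivative_Phi_upd2[OF assms]])

lemma pd2_snd_mult_Phi:
  assumes "x \<in> U" "Re (- \<delta> - 1) > 0" "i \<noteq> k"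
  shows "pd2 (\<lambda>y. snd y $ k * Phi \<gamma> lt lL \<alpha> \<delta> y) i x
           = snd x $ k * (\<alpha> $ i * Phi \<gamma> lt lL (\<alpha> - axis i 1) (\<delta> - 1) x)"
proof -
  have "snd (upd2 x i z) $ k = snd x $ k" for z
    using assms(3) by (simp add: upd2_def)
  then show ?thesis
    unfolding pd2_def using DERIV_cmult[OF has_field_derivative_Phi_upd2[OF assms(1,2)]]
    by (simp add: DERIV_imp_deriv)
qed

end

section \<open>The contiguity relations\<close>

lemma sum_split_off:
  fixes f :: "'n::finite \<Rightarrow> complex"
  shows "(\<Sum>j\<in>UNIV. f j) = f k + (\<Sum>j\<in>UNIV - {k}. f j)"
  by (rule sum.remove) auto

lemma contiguity_identity_x1:
  fixes \<alpha> x1 x2 L :: "'n::finite \<Rightarrow> complex" and t E v \<delta> :: complex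
  assumes L: "\<And>j. L j = x1 j + x2 j * t" "\<And>j. L j \<noteq> 0" and t: "t \<noteq> 0"
  shows "(\<Sum>i\<in>UNIV - {k}. (x1 i * x2 k - x1 k * x2 i) * (\<alpha> i * (E / L k * t / L i * v)))
           + (\<Sum>j\<in>UNIV. \<alpha> j) * x1 k * (E / L k * v)
         = ((\<Sum>j\<in>UNIV. \<alpha> j) - \<delta>) * (E * v)
           - E * t * (- \<delta> * (v / t) + (\<Sum>j\<in>UNIV. \<alpha> j * (x2 j * v / L j)))"
proof -
  have r: "((\<Sum>j\<in>UNIV. \<alpha> j) - \<delta>) * (E * v)
        - E * t * (- \<delta> * (v / t) + (\<Sum>j\<in>UNIV. \<alpha> j * (x2 j * v / L j)))
      = E * v * (\<Sum>j\<in>UNIV. \<alpha> j * x1 j / L j)"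
  proof -
    have "((\<Sum>j\<in>UNIV. \<alpha> j) - \<delta>) * (E * v)
          - E * t * (- \<delta> * (v / t) + (\<Sum>j\<in>UNIV. \<alpha> j * (x2 j * v / L j)))
        = E * v * ((\<Sum>j\<in>UNIV. \<alpha> j) - (\<Sum>j\<in>UNIV. \<alpha> j * (x2 j * t / L j)))"
      using t by (simp add: algebra_simps sum_distrib_left sum_divide_distrib)
    also have "(\<Sum>j\<in>UNIV. \<alpha> j) - (\<Sum>j\<in>UNIV. \<alpha> j * (x2 j * t / L j))
        = (\<Sum>j\<in>UNIV. \<alpha> j * x1 j / L j)"
    proof -
      have "(\<Sum>j\<in>UNIV. \<alpha> j) - (\<Sum>j\<in>UNIV. \<alpha> j * (x2 j * t / L j))
          = (\<Sum>j\<in>UNIV. \<alpha> j - \<alpha> j * (x2 j * t / L j))"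
        by (simp add: sum_subtractf)
      also have "\<dots> = (\<Sum>j\<in>UNIV. \<alpha> j * x1 j / L j)"
      proof (rule sum.cong)
        fix j :: 'n
        have "\<alpha> j - \<alpha> j * (x2 j * t / L j) = \<alpha> j * (L j - x2 j * t) / L j"
          using L(2)[of j] by (simp add: field_simps)
        then show "\<alpha> j - \<alpha> j * (x2 j * t / L j) = \<alpha> j * x1 j / L j"
          using L(1)[of j] by simp
      qed simp
      finally show ?thesis .
    qed
    finally show ?thesis .
  qed
  have l: "(\<Sum>i\<in>UNIV - {k}. (x1 i * x2 k - x1 k * x2 i) * (\<alpha> i * (E / L k * t / L i * v)))
        + (\<Sum>j\<in>UNIV. \<alpha> j) * x1 k * (E / L k * v)
      = E * v * (\<Sum>j\<in>UNIV. \<alpha> j * x1 j / L j)"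
  proof -
    have "(\<Sum>j\<in>UNIV. \<alpha> j) * x1 k * (E / L k * v)
        = E * v * (\<alpha> k * x1 k / L k) + (\<Sum>j\<in>UNIV - {k}. E * v * (\<alpha> j * x1 k / L k))"
      unfolding sum_split_off[of \<alpha> k] by (simp add: algebra_simps sum_distrib_left sum_distrib_right)
    moreover have "(\<Sum>i\<in>UNIV - {k}. (x1 i * x2 k - x1 k * x2 i) * (\<alpha> i * (E / L k * t / L i * v)))
          + (\<Sum>j\<in>UNIV - {k}. E * v * (\<alpha> j * x1 k / L k))
        = (\<Sum>j\<in>UNIV - {k}. E * v * (\<alpha> j * x1 j / L j))"
      unfolding sum.distrib[symmetric]
    proof (rule sum.cong)
      fix j assume "j \<in> UNIV - {k}"
      have h: "(x1 j * x2 k - x1 k * x2 j) * t + x1 k * L j = x1 j * L k"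
        using L(1)[of j] L(1)[of k] by (simp add: algebra_simps)
      have "(x1 j * x2 k - x1 k * x2 j) * (\<alpha> j * (E / L k * t / L j * v))
            + E * v * (\<alpha> j * x1 k / L k)
          = \<alpha> j * E * v / (L k * L j) * ((x1 j * x2 k - x1 k * x2 j) * t + x1 k * L j)"
        using L(2)[of j] L(2)[of k] by (simp add: field_simps)
      also have "\<dots> = \<alpha> j * E * v / (L k * L j) * (x1 j * L k)"
        by (simp only: h)
      also have "\<dots> = E * v * (\<alpha> j * x1 j / L j)"
        using L(2)[of j] L(2)[of k] by (simp add: field_simps)
      finally show "(x1 j * x2 k - x1 k * x2 j) * (\<alpha> j * (E / L k * t / L j * v))
          + E * v * (\<alpha> j * x1 k / L k) = E * v * (\<alpha> j * x1 j / L j)" .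
    qed simp
    ultimately show ?thesis
      unfolding sum_split_off[of "\<lambda>j. \<alpha> j * x1 j / L j" k] by (simp add: algebra_simps sum_distrib_left)
  qed
  show ?thesis
    using l r by simp
qed

lemma contiguity_identity_x2:
  fixes \<alpha> x1 x2 L :: "'n::finite \<Rightarrow> complex" and t E v \<delta> :: complex
  assumes L: "\<And>j. L j = x1 j + x2 j * t" "\<And>j. L j \<noteq> 0" and t: "t \<noteq> 0"
  shows "(\<Sum>i\<in>UNIV - {k}. x1 k * x2 i * (\<alpha> i * (E / L k * t / L i * v)))
       + (\<Sum>i\<in>UNIV - {k}. x2 i * (x2 k * (\<alpha> i * (E / L k * t / L i * t * v))))
       + \<alpha> k * (x2 k * (E / L k * t * v))
     = \<delta> * (E * v) + E * t * (- \<delta> * (v / t) + (\<Sum>j\<in>UNIV. \<alpha> j * (x2 j * v / L j)))"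
proof -
  have r: "\<delta> * (E * v) + E * t * (- \<delta> * (v / t) + (\<Sum>j\<in>UNIV. \<alpha> j * (x2 j * v / L j)))
      = (\<Sum>j\<in>UNIV. E * v * t * (\<alpha> j * x2 j / L j))"
    using t by (simp add: algebra_simps sum_distrib_left)
  have "(\<Sum>i\<in>UNIV - {k}. x1 k * x2 i * (\<alpha> i * (E / L k * t / L i * v)))
       + (\<Sum>i\<in>UNIV - {k}. x2 i * (x2 k * (\<alpha> i * (E / L k * t / L i * t * v))))
      = (\<Sum>j\<in>UNIV - {k}. E * v * t * (\<alpha> j * x2 j / L j))"
    unfolding sum.distrib[symmetric]
  proof (rule sum.cong)
    fix j assume "j \<in> UNIV - {k}"
    have "x1 k * x2 j * (\<alpha> j * (E / L k * t / L j * v))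
          + x2 j * (x2 k * (\<alpha> j * (E / L k * t / L j * t * v)))
        = \<alpha> j * x2 j * E * v * t / (L k * L j) * (x1 k + x2 k * t)"
      using L(2)[of j] L(2)[of k] by (simp add: field_simps)
    also have "\<dots> = \<alpha> j * x2 j * E * v * t / (L k * L j) * L k"
      by (simp only: L(1)[of k])
    also have "\<dots> = E * v * t * (\<alpha> j * x2 j / L j)"
      using L(2)[of j] L(2)[of k] by (simp add: field_simps)
    finally show "x1 k * x2 j * (\<alpha> j * (E / L k * t / L j * v))
          + x2 j * (x2 k * (\<alpha> j * (E / L k * t / L j * t * v)))
        = E * v * t * (\<alpha> j * x2 j / L j)" .
  qed simp
  moreover have "\<alpha> k * (x2 k * (E / L k * t * v)) = E * v * t * (\<alpha> k * x2 k / L k)"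
    by simp
  ultimately show ?thesis
    unfolding r sum_split_off[of "\<lambda>j. E * v * t * (\<alpha> j * x2 j / L j)" k] by (simp add: algebra_simps)
qed

lemma gfun_eq_integrand: "gfun \<gamma> lt lL \<alpha> \<delta> x s = integrand \<gamma> lt lL \<alpha> (\<delta> - 1) x s"
  by (simp add: gfun_def integrand_def)

lemma has_integral_eq_interior:
  fixes f g :: "real \<Rightarrow> complex"
  assumes "(f has_integral a) {0..1}" "(g has_integral b) {0..1}" "\<And>s. s \<in> {0<..<1} \<Longrightarrow> f s = g s"
  shows "a = b"
proof -
  have "(g has_integral a) {0..1}"
    using has_integral_spike_finite_eq[of "{0, 1}" "{0..1}" f g a] assms(1,3) by auto
  then show ?thesis
    using assms(2) has_integral_unique by blast
qed

context euler_integral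
begin

lemma integrand_eq_exp:
  assumes "x \<in> U" "s \<in> {0<..<1}"
  shows "integrand \<gamma> lt lL \<beta> d x s = exp ((- d - 1) * lt s + (\<Sum>k\<in>UNIV. \<beta> $ k * lL k x s))"
proof -
  have "(\<Prod>k\<in>UNIV. pw (lin x k (\<gamma> s)) (lL k x s) (\<beta> $ k)) = exp (\<Sum>k\<in>UNIV. \<beta> $ k * lL k x s)"
    using lin_nonzero assms by (intro prod_pw_eq_exp_sum) auto
  moreover have "\<gamma> s \<noteq> 0"
    using avoid_t assms(2) by auto
  ultimately show ?thesis
    by (simp add: integrand_def pw_def exp_add)
qed

lemma integrand_minus_axis:
  assumes "x \<in> U" "s \<in> {0<..<1}"
  shows "integrand \<gamma> lt lL (\<beta> - axis i 1) d x s = integrand \<gamma> lt lL \<beta> d x s / lin x i (\<gamma> s)"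
proof -
  have "exp (lL i x s) = lin x i (\<gamma> s)"
    using lL_log lin_nonzero assms by auto
  moreover have "exp ((- d - 1) * lt s + ((\<Sum>k\<in>UNIV. \<beta> $ k * lL k x s) - lL i x s))
      = exp ((- d - 1) * lt s + (\<Sum>k\<in>UNIV. \<beta> $ k * lL k x s)) / exp (lL i x s)"
    by (simp add: exp_diff[symmetric] algebra_simps)
  ultimately show ?thesis
    unfolding integrand_eq_exp[OF assms] sum_minus_axis by simp
qed

lemma integrand_minus_one:
  assumes "x \<in> U" "s \<in> {0<..<1}"
  shows "integrand \<gamma> lt lL \<beta> (d - 1) x s = integrand \<gamma> lt lL \<beta> d x s * \<gamma> s"
proof -
  have "exp (lt s) = \<gamma> s"
    using lt_log avoid_t assms(2) by auto
  moreover have "exp ((- (d - 1) - 1) * lt s + (\<Sum>k\<in>UNIV. \<beta> $ k * lL k x s))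
      = exp ((- d - 1) * lt s + (\<Sum>k\<in>UNIV. \<beta> $ k * lL k x s)) * exp (lt s)"
    by (simp add: exp_add[symmetric] algebra_simps)
  ultimately show ?thesis
    unfolding integrand_eq_exp[OF assms] by simp
qed

lemma has_vector_derivative_lL:
  assumes x: "x \<in> U" and s: "s \<in> {0<..<1}" and D: "(\<gamma> has_vector_derivative D) (at s)"
  shows "(lL k x has_vector_derivative snd x $ k * D / lin x k (\<gamma> s)) (at s)"
proof -
  have "s \<in> {0..1}"
    using s by auto
  from lL_eq_Ln_near[OF continuous_on_const refl x this, where k = k]
  obtain d where d: "d > 0" "\<forall>z \<sigma>. dist z (0::complex) < d \<longrightarrow> dist \<sigma> s < d \<longrightarrow> \<sigma> \<in> {0..1} \<longrightarrow>
      x \<in> U \<and> lL k x \<sigma> = lL k x s + Ln (lin x k (\<gamma> \<sigma>) / lin x k (\<gamma> s))"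
    by blast
  have "((\<lambda>\<sigma>. lin x k (\<gamma> \<sigma>)) has_vector_derivative snd x $ k * D) (at s)"
    unfolding lin_def using has_vector_derivative_add[OF has_vector_derivative_const
        has_vector_derivative_mult_right[OF D, of "snd x $ k"], of "fst x $ k"]
    by simp
  then show ?thesis
  proof (rule has_vector_derivative_log_branch)
    show "lin x k (\<gamma> s) \<noteq> 0"
      using lin_nonzero x s by auto
    show "min d (min s (1 - s)) > 0"
      using d(1) s by simp
    fix \<sigma> assume "\<bar>\<sigma> - s\<bar> < min d (min s (1 - s))"
    then show "lL k x \<sigma> = lL k x s + Ln (lin x k (\<gamma> \<sigma>) / lin x k (\<gamma> s))"
      using d(1) d(2)[rule_format, of 0 \<sigma>] by (auto simp: dist_real_def abs_less_iff)
  qed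
qed

text \<open>The logarithmic derivative of g(t, x) in t is -\<delta> / t + \<Sigma>_j \<alpha>_j x_{2j} / (x_{1j} + x_{2j} t).\<close>
lemma has_integral_gfun_deriv:
  assumes x: "x \<in> U" and \<delta>: "Re (- \<delta>) > 0"
  shows "((\<lambda>s. gfun \<gamma> lt lL \<alpha> \<delta> x s * (- \<delta> * (path_deriv \<gamma> s / \<gamma> s)
                + (\<Sum>k\<in>UNIV. \<alpha> $ k * (snd x $ k * path_deriv \<gamma> s / lin x k (\<gamma> s)))))
          has_integral (gfun \<gamma> lt lL \<alpha> \<delta> x 1 - gfun \<gamma> lt lL \<alpha> \<delta> x 0)) {0..1}"
proof -
  obtain S where S: "finite S" "\<And>s. s \<in> {0<..<1} - S \<Longrightarrow> (\<gamma> has_vector_derivative path_deriv \<gamma> s) (at s)"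
    using valid_path_has_path_deriv[OF vp] by blast
  define E where "E s = (- \<delta>) * lt s + (\<Sum>k\<in>UNIV. \<alpha> $ k * lL k x s)" for s
  have gfun_exp: "gfun \<gamma> lt lL \<alpha> \<delta> x s = exp (E s)" if "s \<in> {0<..<1}" for s
    unfolding gfun_eq_integrand integrand_eq_exp[OF x that] E_def by simp
  show ?thesis
  proof (rule fundamental_theorem_of_calculus_interior_strong[OF S(1)])
    fix s assume s: "s \<in> {0<..<1} - S"
    then have s': "s \<in> {0<..<1}" "\<gamma> s \<noteq> 0"
      using avoid_t by auto
    note D = S(2)[OF s]
    have "(lt has_vector_derivative path_deriv \<gamma> s / \<gamma> s) (at s)"
      using has_vector_derivative_path_log_branch[OF \<gamma>_cont lt_cont lt_log s' D] .
    then have "(E has_vector_derivative (- \<delta>) * (path_deriv \<gamma> s / \<gamma> s)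
        + (\<Sum>k\<in>UNIV. \<alpha> $ k * (snd x $ k * path_deriv \<gamma> s / lin x k (\<gamma> s)))) (at s)"
      unfolding E_def
      by (intro has_vector_derivative_add has_vector_derivative_mult_right has_vector_derivative_sum
          has_vector_derivative_lL[OF x s'(1) D])
    from field_vector_diff_chain_at[OF this DERIV_exp]
    have "((\<lambda>\<sigma>. exp (E \<sigma>)) has_vector_derivative gfun \<gamma> lt lL \<alpha> \<delta> x s * (- \<delta> * (path_deriv \<gamma> s / \<gamma> s)
        + (\<Sum>k\<in>UNIV. \<alpha> $ k * (snd x $ k * path_deriv \<gamma> s / lin x k (\<gamma> s))))) (at s)"
      using gfun_exp[OF s'(1)] by (simp add: o_def mult.commute)
    then show "(gfun \<gamma> lt lL \<alpha> \<delta> x has_vector_derivative gfun \<gamma> lt lL \<alpha> \<delta> x s * (- \<delta> * (path_deriv \<gamma> s / \<gamma> s)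
        + (\<Sum>k\<in>UNIV. \<alpha> $ k * (snd x $ k * path_deriv \<gamma> s / lin x k (\<gamma> s))))) (at s)"
    proof (rule has_vector_derivative_transform_within_open[OF _ open_greaterThanLessThan])
      show "s \<in> {0<..<1}"
        using s'(1) .
    qed (simp add: gfun_exp)
  next
    have "continuous_on {0..1} (\<lambda>s. lL k x s)" for k
    proof -
      have "(\<lambda>s::real. (x, s)) ` {0..1} \<subseteq> {(y, s). y \<in> U \<and> s \<in> {0..1} \<and> lin y k (\<gamma> s) \<noteq> 0}"
        using lin_nonzero x by auto
      from continuous_on_compose2[OF lL_cont[rule_format, of k] _ this]
      show ?thesis
        by (simp add: continuous_on_Pair continuous_on_id continuous_on_const)
    qed
    then have "continuous_on {0..1} (\<lambda>s. exp (\<alpha> $ k * lL k x s))" for k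
      by (intro continuous_intros)
    then have "continuous_on {0..1} (\<lambda>s. pw (lin x k (\<gamma> s)) (lL k x s) (\<alpha> $ k))" for k
      by (rule continuous_on_eq) (use lin_nonzero x in \<open>auto simp: pw_def\<close>)
    then have "continuous_on {0..1} (\<lambda>s. \<Prod>k\<in>UNIV. pw (lin x k (\<gamma> s)) (lL k x s) (\<alpha> $ k))"
      by (intro continuous_on_prod)
    moreover have "continuous_on {0..1} (\<lambda>s. pw (\<gamma> s) (lt s) (- \<delta>))"
      using continuous_on_pw_path[OF \<gamma>_cont lt_cont lt_log lt_bdd \<delta>] by simp
    ultimately show "continuous_on {0..1} (gfun \<gamma> lt lL \<alpha> \<delta> x)"
      unfolding gfun_def by (intro continuous_on_mult)
  qed simp
qed

lemma Phi_contiguity_x1: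
  assumes x: "x \<in> U" and \<delta>: "Re (- \<delta> - 1) > 0"
  shows "(\<Sum>i\<in>UNIV - {k}. (fst x $ i * snd x $ k - fst x $ k * snd x $ i)
                         * pd2 (Phi \<gamma> lt lL (\<alpha> - axis k 1) \<delta>) i x)
       + (\<Sum>i\<in>UNIV. \<alpha> $ i) * fst x $ k * Phi \<gamma> lt lL (\<alpha> - axis k 1) \<delta> x
     = ((\<Sum>i\<in>UNIV. \<alpha> $ i) - \<delta>) * Phi \<gamma> lt lL \<alpha> \<delta> x
       - (gfun \<gamma> lt lL \<alpha> \<delta> x 1 - gfun \<gamma> lt lL \<alpha> \<delta> x 0)"
proof -
  define A where "A = \<alpha> - axis k 1"
  define c where "c i = fst x $ i * snd x $ k - fst x $ k * snd x $ i" for i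
  define I where "I \<beta> d s = integrand \<gamma> lt lL \<beta> d x s * path_deriv \<gamma> s" for \<beta> d s
  define g' where "g' s = gfun \<gamma> lt lL \<alpha> \<delta> x s * (- \<delta> * (path_deriv \<gamma> s / \<gamma> s)
      + (\<Sum>j\<in>UNIV. \<alpha> $ j * (snd x $ j * path_deriv \<gamma> s / lin x j (\<gamma> s))))" for s
  have \<delta>': "Re (- (\<delta> - 1) - 1) > 0" "Re (- \<delta>) > 0"
    using \<delta> by simp_all
  have lhs: "((\<lambda>s. (\<Sum>i\<in>UNIV - {k}. c i * (A $ i * I (A - axis i 1) (\<delta> - 1) s))
                  + (\<Sum>i\<in>UNIV. \<alpha> $ i) * fst x $ k * I A \<delta> s)
      has_integral (\<Sum>i\<in>UNIV - {k}. c i * (A $ i * Phi \<gamma> lt lL (A - axis i 1) (\<delta> - 1) x))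
                  + (\<Sum>i\<in>UNIV. \<alpha> $ i) * fst x $ k * Phi \<gamma> lt lL A \<delta> x) {0..1}"
    unfolding I_def
    by (intro has_integral_add has_integral_sum has_integral_mult_right has_integral_Phi[OF x] \<delta> \<delta>') auto
  have rhs: "((\<lambda>s. ((\<Sum>i\<in>UNIV. \<alpha> $ i) - \<delta>) * I \<alpha> \<delta> s - g' s)
      has_integral ((\<Sum>i\<in>UNIV. \<alpha> $ i) - \<delta>) * Phi \<gamma> lt lL \<alpha> \<delta> x
                   - (gfun \<gamma> lt lL \<alpha> \<delta> x 1 - gfun \<gamma> lt lL \<alpha> \<delta> x 0)) {0..1}"
    unfolding I_def g'_def
    by (intro has_integral_diff has_integral_mult_right has_integral_Phi[OF x \<delta>] has_integral_gfun_deriv[OF x \<delta>'(2)])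
  have "(\<Sum>i\<in>UNIV - {k}. c i * (A $ i * I (A - axis i 1) (\<delta> - 1) s)) + (\<Sum>i\<in>UNIV. \<alpha> $ i) * fst x $ k * I A \<delta> s
      = ((\<Sum>i\<in>UNIV. \<alpha> $ i) - \<delta>) * I \<alpha> \<delta> s - g' s" if s: "s \<in> {0<..<1}" for s
  proof -
    define E where "E = integrand \<gamma> lt lL \<alpha> \<delta> x s"
    define L where "L j = lin x j (\<gamma> s)" for j
    have L: "\<And>j. L j = fst x $ j + snd x $ j * \<gamma> s" "\<And>j. L j \<noteq> 0"
      using lin_nonzero x s by (auto simp: L_def lin_def)
    have IA: "integrand \<gamma> lt lL A \<delta> x s = E / L k"
      unfolding A_def E_def L_def by (rule integrand_minus_axis[OF x s])
    have "A $ i * I (A - axis i 1) (\<delta> - 1) s = \<alpha> $ i * (E / L k * \<gamma> s / L i * path_deriv \<gamma> s)"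
      if "i \<noteq> k" for i
    proof -
      have "I (A - axis i 1) (\<delta> - 1) s = E / L k * \<gamma> s / L i * path_deriv \<gamma> s"
        unfolding I_def integrand_minus_one[OF x s] integrand_minus_axis[OF x s] IA L_def by simp
      moreover have "A $ i = \<alpha> $ i"
        using that by (simp add: A_def axis_def)
      ultimately show ?thesis
        by simp
    qed
    then have "(\<Sum>i\<in>UNIV - {k}. c i * (A $ i * I (A - axis i 1) (\<delta> - 1) s))
        = (\<Sum>i\<in>UNIV - {k}. c i * (\<alpha> $ i * (E / L k * \<gamma> s / L i * path_deriv \<gamma> s)))"
      by (intro sum.cong) auto
    moreover have "I A \<delta> s = E / L k * path_deriv \<gamma> s" "I \<alpha> \<delta> s = E * path_deriv \<gamma> s"
      by (simp_all add: I_def IA E_def)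
    moreover have "g' s = E * \<gamma> s * (- \<delta> * (path_deriv \<gamma> s / \<gamma> s)
        + (\<Sum>j\<in>UNIV. \<alpha> $ j * (snd x $ j * path_deriv \<gamma> s / L j)))"
      by (simp add: g'_def gfun_eq_integrand integrand_minus_one[OF x s] E_def L_def)
    moreover have "\<gamma> s \<noteq> 0"
      using avoid_t s by auto
    note contiguity_identity_x1[of L "\<lambda>j. fst x $ j" "\<lambda>j. snd x $ j" "\<gamma> s" k "\<lambda>j. \<alpha> $ j" E
        "path_deriv \<gamma> s" \<delta>, OF L this]
    ultimately show ?thesis
      by (simp add: c_def)
  qed
  from has_integral_eq_interior[OF lhs rhs this]
  show ?thesis
    unfolding A_def[symmetric] c_def[symmetric] pd2_Phi[OF x \<delta>] .
qed

lemma Phi_contiguity_x2: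
  assumes x: "x \<in> U" and \<delta>: "Re (- \<delta> - 1) > 0"
  shows "(\<Sum>i\<in>UNIV - {k}. fst x $ k * snd x $ i * pd1 (Phi \<gamma> lt lL (\<alpha> - axis k 1) (\<delta> - 1)) i x)
       + (\<Sum>i\<in>UNIV - {k}. snd x $ i
            * pd2 (\<lambda>y. snd y $ k * Phi \<gamma> lt lL (\<alpha> - axis k 1) (\<delta> - 1) y) i x)
       + \<alpha> $ k * (snd x $ k * Phi \<gamma> lt lL (\<alpha> - axis k 1) (\<delta> - 1) x)
     = \<delta> * Phi \<gamma> lt lL \<alpha> \<delta> x
       + (gfun \<gamma> lt lL \<alpha> \<delta> x 1 - gfun \<gamma> lt lL \<alpha> \<delta> x 0)"
proof -
  define A where "A = \<alpha> - axis k 1"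
  define x1 where "x1 j = fst x $ j" for j
  define x2 where "x2 j = snd x $ j" for j
  define a where "a j = \<alpha> $ j" for j
  define b where "b j = A $ j" for j
  define I where "I \<beta> d s = integrand \<gamma> lt lL \<beta> d x s * path_deriv \<gamma> s" for \<beta> d s
  define g' where "g' s = gfun \<gamma> lt lL \<alpha> \<delta> x s * (- \<delta> * (path_deriv \<gamma> s / \<gamma> s)
      + (\<Sum>j\<in>UNIV. \<alpha> $ j * (snd x $ j * path_deriv \<gamma> s / lin x j (\<gamma> s))))" for s
  have \<delta>': "Re (- (\<delta> - 1) - 1) > 0" "Re (- (\<delta> - 1 - 1) - 1) > 0" "Re (- \<delta>) > 0"
    using \<delta> by simp_all
  have lhs: "((\<lambda>s. (\<Sum>i\<in>UNIV - {k}. x1 k * x2 i * (b i * I (A - axis i 1) (\<delta> - 1) s))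
                  + (\<Sum>i\<in>UNIV - {k}. x2 i * (x2 k * (b i * I (A - axis i 1) (\<delta> - 1 - 1) s)))
                  + a k * (x2 k * I A (\<delta> - 1) s))
      has_integral (\<Sum>i\<in>UNIV - {k}. x1 k * x2 i * (b i * Phi \<gamma> lt lL (A - axis i 1) (\<delta> - 1) x))
                  + (\<Sum>i\<in>UNIV - {k}. x2 i * (x2 k * (b i * Phi \<gamma> lt lL (A - axis i 1) (\<delta> - 1 - 1) x)))
                  + a k * (x2 k * Phi \<gamma> lt lL A (\<delta> - 1) x)) {0..1}"
  proof -
    have "((\<lambda>s. \<Sum>i\<in>UNIV - {k}. x1 k * x2 i * (b i * I (A - axis i 1) (\<delta> - 1) s))
        has_integral (\<Sum>i\<in>UNIV - {k}. x1 k * x2 i * (b i * Phi \<gamma> lt lL (A - axis i 1) (\<delta> - 1) x)))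
        {0..1}"
      unfolding I_def by (intro has_integral_sum has_integral_mult_right has_integral_Phi[OF x \<delta>'(1)]) auto
    moreover have "((\<lambda>s. \<Sum>i\<in>UNIV - {k}. x2 i * (x2 k * (b i * I (A - axis i 1) (\<delta> - 1 - 1) s)))
        has_integral (\<Sum>i\<in>UNIV - {k}. x2 i * (x2 k * (b i * Phi \<gamma> lt lL (A - axis i 1) (\<delta> - 1 - 1) x))))
        {0..1}"
      unfolding I_def by (intro has_integral_sum has_integral_mult_right has_integral_Phi[OF x \<delta>'(2)]) auto
    moreover have "((\<lambda>s. a k * (x2 k * I A (\<delta> - 1) s))
        has_integral a k * (x2 k * Phi \<gamma> lt lL A (\<delta> - 1) x)) {0..1}"
      unfolding I_def by (intro has_integral_mult_right has_integral_Phi[OF x \<delta>'(1)])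
    ultimately show ?thesis
      by (intro has_integral_add)
  qed
  have rhs: "((\<lambda>s. \<delta> * I \<alpha> \<delta> s + g' s)
      has_integral \<delta> * Phi \<gamma> lt lL \<alpha> \<delta> x + (gfun \<gamma> lt lL \<alpha> \<delta> x 1 - gfun \<gamma> lt lL \<alpha> \<delta> x 0)) {0..1}"
    unfolding I_def g'_def
    by (intro has_integral_add has_integral_mult_right has_integral_Phi[OF x \<delta>] has_integral_gfun_deriv[OF x \<delta>'(3)])
  have "(\<Sum>i\<in>UNIV - {k}. x1 k * x2 i * (b i * I (A - axis i 1) (\<delta> - 1) s))
      + (\<Sum>i\<in>UNIV - {k}. x2 i * (x2 k * (b i * I (A - axis i 1) (\<delta> - 1 - 1) s)))
      + a k * (x2 k * I A (\<delta> - 1) s)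
      = \<delta> * I \<alpha> \<delta> s + g' s" if s: "s \<in> {0<..<1}" for s
  proof -
    define E where "E = integrand \<gamma> lt lL \<alpha> \<delta> x s"
    define L where "L j = lin x j (\<gamma> s)" for j
    have L: "\<And>j. L j = fst x $ j + snd x $ j * \<gamma> s" "\<And>j. L j \<noteq> 0"
      using lin_nonzero x s by (auto simp: L_def lin_def)
    have IA: "integrand \<gamma> lt lL A \<delta> x s = E / L k"
      unfolding A_def E_def L_def by (rule integrand_minus_axis[OF x s])
    have "b i * I (A - axis i 1) (\<delta> - 1) s = \<alpha> $ i * (E / L k * \<gamma> s / L i * path_deriv \<gamma> s)"
      "b i * I (A - axis i 1) (\<delta> - 1 - 1) s = \<alpha> $ i * (E / L k * \<gamma> s / L i * \<gamma> s * path_deriv \<gamma> s)"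
      if "i \<noteq> k" for i
    proof -
      have "b i = \<alpha> $ i"
        using that by (simp add: b_def A_def axis_def)
      moreover have "I (A - axis i 1) (\<delta> - 1) s = E / L k * \<gamma> s / L i * path_deriv \<gamma> s"
        "I (A - axis i 1) (\<delta> - 1 - 1) s = E / L k * \<gamma> s / L i * \<gamma> s * path_deriv \<gamma> s"
        unfolding I_def integrand_minus_one[OF x s] integrand_minus_axis[OF x s] IA L_def by simp_all
      ultimately show "b i * I (A - axis i 1) (\<delta> - 1) s = \<alpha> $ i * (E / L k * \<gamma> s / L i * path_deriv \<gamma> s)"
        "b i * I (A - axis i 1) (\<delta> - 1 - 1) s = \<alpha> $ i * (E / L k * \<gamma> s / L i * \<gamma> s * path_deriv \<gamma> s)"
        by simp_all
    qed
    then have "(\<Sum>i\<in>UNIV - {k}. x1 k * x2 i * (b i * I (A - axis i 1) (\<delta> - 1) s))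
        = (\<Sum>i\<in>UNIV - {k}. x1 k * x2 i * (\<alpha> $ i * (E / L k * \<gamma> s / L i * path_deriv \<gamma> s)))"
      "(\<Sum>i\<in>UNIV - {k}. x2 i * (x2 k * (b i * I (A - axis i 1) (\<delta> - 1 - 1) s)))
        = (\<Sum>i\<in>UNIV - {k}. x2 i * (x2 k * (\<alpha> $ i * (E / L k * \<gamma> s / L i * \<gamma> s * path_deriv \<gamma> s))))"
      by (auto intro: sum.cong)
    moreover have "I A (\<delta> - 1) s = E / L k * \<gamma> s * path_deriv \<gamma> s" "I \<alpha> \<delta> s = E * path_deriv \<gamma> s"
      by (simp_all add: I_def integrand_minus_one[OF x s] IA E_def)
    moreover have "g' s = E * \<gamma> s * (- \<delta> * (path_deriv \<gamma> s / \<gamma> s)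
        + (\<Sum>j\<in>UNIV. \<alpha> $ j * (snd x $ j * path_deriv \<gamma> s / L j)))"
      by (simp add: g'_def gfun_eq_integrand integrand_minus_one[OF x s] E_def L_def)
    moreover have "\<gamma> s \<noteq> 0"
      using avoid_t s by auto
    note contiguity_identity_x2[of L "\<lambda>j. fst x $ j" "\<lambda>j. snd x $ j" "\<gamma> s" k "\<lambda>j. \<alpha> $ j" E
        "path_deriv \<gamma> s" \<delta>, OF L this]
    ultimately show ?thesis
      by (simp add: x1_def x2_def a_def)
  qed
  from has_integral_eq_interior[OF lhs rhs this]
  have "(\<Sum>i\<in>UNIV - {k}. x1 k * x2 i * (b i * Phi \<gamma> lt lL (A - axis i 1) (\<delta> - 1) x))
      + (\<Sum>i\<in>UNIV - {k}. x2 i * (x2 k * (b i * Phi \<gamma> lt lL (A - axis i 1) (\<delta> - 1 - 1) x)))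
      + a k * (x2 k * Phi \<gamma> lt lL A (\<delta> - 1) x)
      = \<delta> * Phi \<gamma> lt lL \<alpha> \<delta> x + (gfun \<gamma> lt lL \<alpha> \<delta> x 1 - gfun \<gamma> lt lL \<alpha> \<delta> x 0)" .
  moreover have "(\<Sum>i\<in>UNIV - {k}. x2 i * pd2 (\<lambda>y. snd y $ k * Phi \<gamma> lt lL A (\<delta> - 1) y) i x)
      = (\<Sum>i\<in>UNIV - {k}. x2 i * (x2 k * (b i * Phi \<gamma> lt lL (A - axis i 1) (\<delta> - 1 - 1) x)))"
    using pd2_snd_mult_Phi[OF x \<delta>'(1)] by (intro sum.cong) (auto simp: x2_def b_def)
  moreover have "pd1 (Phi \<gamma> lt lL A (\<delta> - 1)) i x = b i * Phi \<gamma> lt lL (A - axis i 1) (\<delta> - 1) x" for i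
    using pd1_Phi[OF x \<delta>'(1)] by (simp add: b_def)
  ultimately show ?thesis
    unfolding A_def[symmetric] by (simp add: x1_def x2_def a_def)
qed

end

theorem theorem4:
  fixes a b :: complex
    and \<gamma> :: "real \<Rightarrow> complex"
    and lt :: "real \<Rightarrow> complex"
    and lL :: "'n::finite \<Rightarrow> (complex^'n) \<times> (complex^'n) \<Rightarrow> real \<Rightarrow> complex"
    and U :: "((complex^'n) \<times> (complex^'n)) set"
    and \<alpha> :: "complex^'n" and \<delta> :: complex
    and x :: "(complex^'n) \<times> (complex^'n)"
    and k :: 'n
  assumes path: "valid_path \<gamma>" "pathstart \<gamma> = a" "pathfinish \<gamma> = b"
    and U: "open U" "x \<in> U"
    and avoid_t: "\<forall>s\<in>{0<..<1}. \<gamma> s \<noteq> 0"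
    and avoid_L: "\<forall>y\<in>U. \<forall>s\<in>{0<..<1}. \<forall>i. lin y i (\<gamma> s) \<noteq> 0"
    and lt_cont: "continuous_on {s\<in>{0..1}. \<gamma> s \<noteq> 0} lt"
    and lt_log: "\<forall>s\<in>{0..1}. \<gamma> s \<noteq> 0 \<longrightarrow> exp (lt s) = \<gamma> s"
    and lt_bdd: "bounded (Im ` lt ` {s\<in>{0..1}. \<gamma> s \<noteq> 0})"
    and lL_cont: "\<forall>i. continuous_on {(y, s). y \<in> U \<and> s \<in> {0..1} \<and> lin y i (\<gamma> s) \<noteq> 0}
                        (\<lambda>(y, s). lL i y s)"
    and lL_log: "\<forall>i. \<forall>y\<in>U. \<forall>s\<in>{0..1}. lin y i (\<gamma> s) \<noteq> 0 \<longrightarrow> exp (lL i y s) = lin y i (\<gamma> s)"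
    and re_delta: "Re (- \<delta> - 1) > 0"
    and re_alpha: "\<forall>i. Re (\<alpha> $ i) > 0"
  shows
    "pd1 (Phi \<gamma> lt lL \<alpha> \<delta>) k x = \<alpha> $ k * Phi \<gamma> lt lL (\<alpha> - axis k 1) \<delta> x
     \<and>
     (\<Sum>i\<in>UNIV - {k}. (fst x $ i * snd x $ k - fst x $ k * snd x $ i)
                         * pd2 (Phi \<gamma> lt lL (\<alpha> - axis k 1) \<delta>) i x)
       + (\<Sum>i\<in>UNIV. \<alpha> $ i) * fst x $ k * Phi \<gamma> lt lL (\<alpha> - axis k 1) \<delta> x
     = ((\<Sum>i\<in>UNIV. \<alpha> $ i) - \<delta>) * Phi \<gamma> lt lL \<alpha> \<delta> x
       - (gfun \<gamma> lt lL \<alpha> \<delta> x 1 - gfun \<gamma> lt lL \<alpha> \<delta> x 0)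
     \<and>
     pd2 (Phi \<gamma> lt lL \<alpha> \<delta>) k x = \<alpha> $ k * Phi \<gamma> lt lL (\<alpha> - axis k 1) (\<delta> - 1) x
     \<and>
     (\<Sum>i\<in>UNIV - {k}. fst x $ k * snd x $ i * pd1 (Phi \<gamma> lt lL (\<alpha> - axis k 1) (\<delta> - 1)) i x)
       + (\<Sum>i\<in>UNIV - {k}. snd x $ i
            * pd2 (\<lambda>y. snd y $ k * Phi \<gamma> lt lL (\<alpha> - axis k 1) (\<delta> - 1) y) i x)
       + \<alpha> $ k * (snd x $ k * Phi \<gamma> lt lL (\<alpha> - axis k 1) (\<delta> - 1) x)
     = \<delta> * Phi \<gamma> lt lL \<alpha> \<delta> x
       + (gfun \<gamma> lt lL \<alpha> \<delta> x 1 - gfun \<gamma> lt lL \<alpha> \<delta> x 0)"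
proof -
  interpret euler_integral \<gamma> lt lL U
    by unfold_locales (use path(1) U(1) avoid_t avoid_L lt_cont lt_log lt_bdd lL_cont lL_log in auto)
  show ?thesis
    by (intro conjI pd1_Phi Phi_contiguity_x1 pd2_Phi Phi_contiguity_x2 U(2) re_delta)
qed

end
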